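(* Let $\Omega\subset\mathbb{R}^2$ be open and $\gamma:\Omega\to\mathbb{R}^2$ a smooth map satisfying $\gamma_{,tt}=\gamma_{,ss}$, $\langle\gamma_{,t},\gamma_{,s}\rangle = 0$ and $|\gamma_{,t}|^2+|\gamma_{,s}|^2=1$, and let $\mathcal{S}$ be the ``timelike maximal'' surface $\{(t,\gamma(t,s))\}\subset\mathbb{R}^{1+2}$. Suppose $(t_0,s_0)\in\Omega$ satisfies $\gamma_{,s}(t_0,s_0)=0$ and $\gamma_{,ts}(t_0,s_0)\neq0$. Then locally around $(t_0,s_0)$ the singularities of $\mathcal{S}$ (the points where $\gamma_{,s}=0$) lie along the null curve $s\mapsto(T(s),\gamma(T(s),s))$, where $T$ solves \[ T'(s) = -\frac{\langle\gamma_{,ss}(T(s),s),\gamma_{,ts}(T(s),s)\rangle}{|\gamma_{,ts}(T(s),s)|^2},\qquad T(s_0)=t_0. \] Furthermore, if $\gamma_{,ss}(t_0,s_0)=0$ and $\gamma_{,sss}(t_0,s_0)\neq0$, then these singularities are cusps (except possibly $\gamma(t_0,s_0)$), and the curve $s\mapsto(T(s),\gamma(T(s),s))$ lies entirely in the past of $t_0$ if $\langle\gamma_{,sss},\gamma_{,ts}\rangle(t_0,s_0)>0$ and entirely in the future if $\langle\gamma_{,sss},\gamma_{,ts}\rangle(t_0,s_0)<0$, and it splits into two null curves which join together at $(t_0,\gamma(t_0,s_0))$ as a cusp.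
   Context: $\mathbb{R}^{1+2}$ is Minkowski space with metric $-dt^2+|dx|^2$; subscripts after commas denote partial derivatives; $\langle\cdot,\cdot\rangle$ is the Euclidean inner product on $\mathbb{R}^2$. *)

theory Defs
  imports "HOL-Analysis.Analysis"
begin

definition pt :: "(real \<times> real \<Rightarrow> 'a::real_normed_vector) \<Rightarrow> real \<times> real \<Rightarrow> 'a" where
  "pt f = (\<lambda>(t,s). vector_derivative (\<lambda>\<tau>. f (\<tau>,s)) (at t))"

definition ps :: "(real \<times> real \<Rightarrow> 'a::real_normed_vector) \<Rightarrow> real \<times> real \<Rightarrow> 'a" where
  "ps f = (\<lambda>(t,s). vector_derivative (\<lambda>\<sigma>. f (t,\<sigma>)) (at s))"

text \<open>Iterated partial derivative: True = d/dt, False = d/ds (applied right to left).\<close>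
fun pdiff :: "bool list \<Rightarrow> (real \<times> real \<Rightarrow> 'a::real_normed_vector) \<Rightarrow> real \<times> real \<Rightarrow> 'a" where
  "pdiff [] f = f"
| "pdiff (b # bs) f = (if b then pt else ps) (pdiff bs f)"

definition C_inf_on :: "(real \<times> real) set \<Rightarrow> (real \<times> real \<Rightarrow> 'a::real_normed_vector) \<Rightarrow> bool" where
  "C_inf_on \<Omega> f \<longleftrightarrow> (\<forall>bs. continuous_on \<Omega> (pdiff bs f) \<and>
      (\<forall>t s. (t,s) \<in> \<Omega> \<longrightarrow> (\<lambda>\<tau>. pdiff bs f (\<tau>,s)) differentiable (at t)
                         \<and> (\<lambda>\<sigma>. pdiff bs f (t,\<sigma>)) differentiable (at s)))"

definition vd :: "(real \<Rightarrow> 'a::real_normed_vector) \<Rightarrow> real \<Rightarrow> 'a" where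
  "vd f = (\<lambda>x. vector_derivative f (at x))"

definition smooth1_on :: "real set \<Rightarrow> (real \<Rightarrow> 'a::real_normed_vector) \<Rightarrow> bool" where
  "smooth1_on I f \<longleftrightarrow> (\<forall>n. \<forall>x\<in>I. ((vd ^^ n) f) differentiable (at x))"

definition mink :: "real \<times> (real^2) \<Rightarrow> real" where
  "mink v = - (fst v)\<^sup>2 + (norm (snd v))\<^sup>2"

definition lin_indep2 :: "'a::real_vector \<Rightarrow> 'a \<Rightarrow> bool" where
  "lin_indep2 u v \<longleftrightarrow> (\<forall>a b. a *\<^sub>R u + b *\<^sub>R v = 0 \<longrightarrow> a = 0 \<and> b = 0)"

text \<open>Ordinary cusp of the plane curve s \<mapsto> gamma(t,s) at parameter s (time slice of the surface).\<close>
definition slice_cusp :: "(real \<times> real \<Rightarrow> real^2) \<Rightarrow> real \<Rightarrow> real \<Rightarrow> bool" where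
  "slice_cusp \<gamma> t s \<longleftrightarrow> ps \<gamma> (t,s) = 0 \<and> lin_indep2 (ps (ps \<gamma>) (t,s)) (ps (ps (ps \<gamma>)) (t,s))"

definition curve_cusp :: "(real \<Rightarrow> 'a::real_normed_vector) \<Rightarrow> real \<Rightarrow> bool" where
  "curve_cusp c s \<longleftrightarrow> vd c s = 0 \<and> lin_indep2 (vd (vd c) s) (vd (vd (vd c)) s)"

end

theory Submission
  imports Defs
begin

text \<open>
  By orthogonality, away from \<open>\<gamma>\<^sub>,\<^sub>t = 0\<close> the singular points (\<open>\<gamma>\<^sub>,\<^sub>s = 0\<close>) are exactly the
  zeros of \<open>h = det(\<gamma>\<^sub>,\<^sub>s, \<gamma>\<^sub>,\<^sub>t)\<close>. At a singular point \<open>|\<gamma>\<^sub>,\<^sub>t| = 1\<close>, and differentiating the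
  two constraints in \<open>s\<close> shows \<open>\<gamma>\<^sub>,\<^sub>t\<^sub>s \<bottom> \<gamma>\<^sub>,\<^sub>t\<close> and \<open>\<gamma>\<^sub>,\<^sub>s\<^sub>s \<bottom> \<gamma>\<^sub>,\<^sub>t\<close>. Hence
  \<open>h\<^sub>,\<^sub>t = det(\<gamma>\<^sub>,\<^sub>t\<^sub>s, \<gamma>\<^sub>,\<^sub>t) \<noteq> 0\<close>, the implicit function theorem gives the singular curve
  \<open>t = T(s)\<close>, and \<open>T' = -h\<^sub>,\<^sub>s/h\<^sub>,\<^sub>t = -\<langle>\<gamma>\<^sub>,\<^sub>s\<^sub>s,\<gamma>\<^sub>,\<^sub>t\<^sub>s\<rangle>/|\<gamma>\<^sub>,\<^sub>t\<^sub>s|\<^sup>2\<close> because in the plane two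
  vectors orthogonal to the unit vector \<open>\<gamma>\<^sub>,\<^sub>t\<close> are parallel. Since \<open>\<gamma>\<^sub>,\<^sub>s = 0\<close> along the
  curve, its lift has velocity \<open>T'(1, \<gamma>\<^sub>,\<^sub>t)\<close>, which is null.

  If moreover \<open>\<gamma>\<^sub>,\<^sub>s\<^sub>s = 0\<close> at \<open>s\<^sub>0\<close>, the twice differentiated orthogonality constraint also
  makes \<open>\<gamma>\<^sub>,\<^sub>s\<^sub>s\<^sub>s \<bottom> \<gamma>\<^sub>,\<^sub>t\<close>, so \<open>T'(s\<^sub>0) = 0\<close> and \<open>T''(s\<^sub>0) = -\<langle>\<gamma>\<^sub>,\<^sub>s\<^sub>s\<^sub>s,\<gamma>\<^sub>,\<^sub>t\<^sub>s\<rangle>/|\<gamma>\<^sub>,\<^sub>t\<^sub>s|\<^sup>2 \<noteq> 0\<close>: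
  \<open>T\<close> has a strict extremum at \<open>s\<^sub>0\<close> and the lift has a cusp there. At the other points
  \<open>T' \<noteq> 0\<close> forces \<open>\<gamma>\<^sub>,\<^sub>s\<^sub>s \<noteq> 0\<close>, while \<open>\<langle>\<gamma>\<^sub>,\<^sub>t,\<gamma>\<^sub>,\<^sub>s\<^sub>s\<^sub>s\<rangle> = -2\<langle>\<gamma>\<^sub>,\<^sub>t\<^sub>s,\<gamma>\<^sub>,\<^sub>s\<^sub>s\<rangle> \<noteq> 0\<close> makes
  \<open>\<gamma>\<^sub>,\<^sub>s\<^sub>s\<^sub>s\<close> independent of \<open>\<gamma>\<^sub>,\<^sub>s\<^sub>s\<close>: each time slice has an ordinary cusp.
\<close>

lemma pt_Pair: "pt f (t,s) = vector_derivative (\<lambda>\<tau>. f (\<tau>,s)) (at t)"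
  by (simp add: pt_def)

lemma ps_Pair: "ps f (t,s) = vector_derivative (\<lambda>\<sigma>. f (t,\<sigma>)) (at s)"
  by (simp add: ps_def)

lemma has_real_derivative_pt:
  fixes f :: "real \<times> real \<Rightarrow> real"
  assumes "(\<lambda>\<tau>. f (\<tau>,s)) differentiable at t"
  shows "((\<lambda>\<tau>. f (\<tau>,s)) has_real_derivative pt f (t,s)) (at t)"
  using vector_derivative_works[THEN iffD1, OF assms]
  by (simp add: pt_Pair has_real_derivative_iff_has_vector_derivative)

lemma has_real_derivative_ps:
  fixes f :: "real \<times> real \<Rightarrow> real"
  assumes "(\<lambda>\<sigma>. f (t,\<sigma>)) differentiable at s"
  shows "((\<lambda>\<sigma>. f (t,\<sigma>)) has_real_derivative ps f (t,s)) (at s)"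
  using vector_derivative_works[THEN iffD1, OF assms]
  by (simp add: ps_Pair has_real_derivative_iff_has_vector_derivative)

lemma pt_eqI:
  fixes f :: "real \<times> real \<Rightarrow> real"
  assumes "((\<lambda>\<tau>. f (\<tau>,s)) has_real_derivative D) (at t)"
  shows "pt f (t,s) = D"
  using assms by (simp add: pt_Pair has_real_derivative_iff_has_vector_derivative vector_derivative_at)

lemma ps_eqI:
  fixes f :: "real \<times> real \<Rightarrow> real"
  assumes "((\<lambda>\<sigma>. f (t,\<sigma>)) has_real_derivative D) (at s)"
  shows "ps f (t,s) = D"
  using assms by (simp add: ps_Pair has_real_derivative_iff_has_vector_derivative vector_derivative_at)

lemma open_t_slice: "open W \<Longrightarrow> open {\<tau>. (\<tau>,s) \<in> W}"
  by (rule open_vimage[of W "\<lambda>\<tau>. (\<tau>,s)", simplified vimage_def]) (auto intro!: continuous_intros)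

lemma open_s_slice: "open W \<Longrightarrow> open {\<sigma>. (t,\<sigma>) \<in> W}"
  by (rule open_vimage[of W "\<lambda>\<sigma>. (t,\<sigma>)", simplified vimage_def]) (auto intro!: continuous_intros)

lemma pt_cong_open:
  assumes "open W" "\<And>p. p \<in> W \<Longrightarrow> f p = g p" "(t,s) \<in> W"
  shows "pt f (t,s) = pt g (t,s)"
proof -
  have "eventually (\<lambda>x. x \<in> UNIV \<longrightarrow> f (x,s) = g (x,s)) (nhds t)"
    using open_t_slice[OF assms(1), of s] assms(2,3)
    by (auto simp: eventually_nhds intro!: exI[of _ "{\<tau>. (\<tau>,s) \<in> W}"])
  from vector_derivative_cong_eq[OF this refl refl] show ?thesis by (simp add: pt_Pair)
qed

lemma ps_cong_open:
  assumes "open W" "\<And>p. p \<in> W \<Longrightarrow> f p = g p" "(t,s) \<in> W"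
  shows "ps f (t,s) = ps g (t,s)"
proof -
  have "eventually (\<lambda>x. x \<in> UNIV \<longrightarrow> f (t,x) = g (t,x)) (nhds s)"
    using open_s_slice[OF assms(1), of t] assms(2,3)
    by (auto simp: eventually_nhds intro!: exI[of _ "{\<sigma>. (t,\<sigma>) \<in> W}"])
  from vector_derivative_cong_eq[OF this refl refl] show ?thesis by (simp add: ps_Pair)
qed

lemma ps_eq_0_open:
  "open W \<Longrightarrow> (\<And>q. q \<in> W \<Longrightarrow> f q = 0) \<Longrightarrow> p \<in> W \<Longrightarrow> ps f p = (0::real)"
  using ps_cong_open[of W f "\<lambda>p. 0" "fst p" "snd p"] by (simp add: ps_def)

lemma differentiable_t_slice_cong_open:
  assumes "open W" "\<And>p. p \<in> W \<Longrightarrow> f p = g p" "(t,s) \<in> W"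
    and "(\<lambda>\<tau>. f (\<tau>,s)) differentiable at t"
  shows "(\<lambda>\<tau>. g (\<tau>,s)) differentiable at t"
proof -
  from assms(4) obtain D where D: "((\<lambda>\<tau>. f (\<tau>,s)) has_derivative D) (at t)"
    by (auto simp: differentiable_def)
  have "((\<lambda>\<tau>. g (\<tau>,s)) has_derivative D) (at t)"
    by (rule has_derivative_transform_within_open[OF D open_t_slice[OF assms(1)]]) (use assms in auto)
  then show ?thesis by (auto simp: differentiable_def)
qed

lemma differentiable_s_slice_cong_open:
  assumes "open W" "\<And>p. p \<in> W \<Longrightarrow> f p = g p" "(t,s) \<in> W"
    and "(\<lambda>\<sigma>. f (t,\<sigma>)) differentiable at s"
  shows "(\<lambda>\<sigma>. g (t,\<sigma>)) differentiable at s"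
proof -
  from assms(4) obtain D where D: "((\<lambda>\<sigma>. f (t,\<sigma>)) has_derivative D) (at s)"
    by (auto simp: differentiable_def)
  have "((\<lambda>\<sigma>. g (t,\<sigma>)) has_derivative D) (at s)"
    by (rule has_derivative_transform_within_open[OF D open_s_slice[OF assms(1)]]) (use assms in auto)
  then show ?thesis by (auto simp: differentiable_def)
qed

section \<open>Smooth scalar functions of two variables\<close>

definition partially_differentiable_on :: "(real \<times> real) set \<Rightarrow> (real \<times> real \<Rightarrow> real) \<Rightarrow> bool" where
  "partially_differentiable_on W f \<longleftrightarrow> (\<forall>t s. (t,s) \<in> W \<longrightarrow>
     (\<lambda>\<tau>. f (\<tau>,s)) differentiable at t \<and> (\<lambda>\<sigma>. f (t,\<sigma>)) differentiable at s)"

text \<open>The scalar counterpart of \<open>C_inf_on\<close>, graded by the order \<open>k\<close> so that closure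
  under products and quotients can be proved by induction on \<open>k\<close>.\<close>

primrec Ck_on :: "nat \<Rightarrow> (real \<times> real) set \<Rightarrow> (real \<times> real \<Rightarrow> real) \<Rightarrow> bool" where
  "Ck_on 0 W f = continuous_on W f"
| "Ck_on (Suc k) W f = (continuous_on W f \<and> partially_differentiable_on W f \<and>
     Ck_on k W (pt f) \<and> Ck_on k W (ps f))"

definition Cinf_on :: "(real \<times> real) set \<Rightarrow> (real \<times> real \<Rightarrow> real) \<Rightarrow> bool" where
  "Cinf_on W f \<longleftrightarrow> (\<forall>k. Ck_on k W f)"

declare Ck_on.simps(2)[simp del]

lemma Ck_on_SucD:
  "Ck_on (Suc k) W f \<Longrightarrow>
     continuous_on W f \<and> partially_differentiable_on W f \<and> Ck_on k W (pt f) \<and> Ck_on k W (ps f)"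
  by (simp add: Ck_on.simps(2))

lemma Ck_on_SucI:
  "continuous_on W f \<Longrightarrow> partially_differentiable_on W f \<Longrightarrow> Ck_on k W (pt f) \<Longrightarrow>
     Ck_on k W (ps f) \<Longrightarrow> Ck_on (Suc k) W f"
  by (simp add: Ck_on.simps(2))

lemma Ck_on_imp_continuous_on: "Ck_on k W f \<Longrightarrow> continuous_on W f"
  by (cases k) (auto dest: Ck_on_SucD)

lemma Ck_on_Suc_imp_Ck_on: "Ck_on (Suc k) W f \<Longrightarrow> Ck_on k W f"
proof (induction k arbitrary: f)
  case 0 then show ?case by (auto dest: Ck_on_SucD)
next
  case (Suc k)
  note F = Ck_on_SucD[OF Suc.prems]
  show ?case using F Suc.IH[of "pt f"] Suc.IH[of "ps f"] by (intro Ck_on_SucI) simp_all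
qed

lemma partially_differentiable_on_cong:
  assumes "open W" "\<And>p. p \<in> W \<Longrightarrow> f p = g p" "partially_differentiable_on W f"
  shows "partially_differentiable_on W g"
  unfolding partially_differentiable_on_def
proof (intro allI impI conjI)
  fix t s assume ts: "(t,s) \<in> W"
  with assms(3) show "(\<lambda>\<tau>. g (\<tau>,s)) differentiable at t" "(\<lambda>\<sigma>. g (t,\<sigma>)) differentiable at s"
    by (auto simp: partially_differentiable_on_def intro: differentiable_t_slice_cong_open[OF assms(1,2) ts]
        differentiable_s_slice_cong_open[OF assms(1,2) ts])
qed

lemma Ck_on_cong:
  assumes "open W" shows "(\<And>p. p \<in> W \<Longrightarrow> f p = g p) \<Longrightarrow> Ck_on k W f \<Longrightarrow> Ck_on k W g"
proof (induction k arbitrary: f g)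
  case 0 then show ?case using continuous_on_cong[OF refl, of W f g] by simp
next
  case (Suc k)
  note F = Ck_on_SucD[OF Suc.prems(2)]
  have "Ck_on k W (pt g)"
    by (rule Suc.IH[of "pt f"]) (use F pt_cong_open[OF assms, of f g] Suc.prems(1) in auto)
  moreover have "Ck_on k W (ps g)"
    by (rule Suc.IH[of "ps f"]) (use F ps_cong_open[OF assms, of f g] Suc.prems(1) in auto)
  ultimately show ?case
    using F Suc.prems(1) continuous_on_cong[OF refl, of W f g] partially_differentiable_on_cong[OF assms]
    by (intro Ck_on_SucI) auto
qed

lemma Ck_on_subset: "V \<subseteq> W \<Longrightarrow> Ck_on k W f \<Longrightarrow> Ck_on k V f"
proof (induction k arbitrary: f)
  case 0 then show ?case by (auto intro: continuous_on_subset)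
next
  case (Suc k)
  show ?case using Ck_on_SucD[OF Suc.prems(2)] Suc.IH[OF Suc.prems(1)] Suc.prems(1)
    by (intro Ck_on_SucI) (auto simp: partially_differentiable_on_def intro: continuous_on_subset)
qed

lemma Cinf_on_pt: "Cinf_on W f \<Longrightarrow> Cinf_on W (pt f)"
  unfolding Cinf_on_def by (metis Ck_on_SucD)

lemma Cinf_on_ps: "Cinf_on W f \<Longrightarrow> Cinf_on W (ps f)"
  unfolding Cinf_on_def by (metis Ck_on_SucD)

lemma Cinf_on_imp_continuous_on: "Cinf_on W f \<Longrightarrow> continuous_on W f"
  unfolding Cinf_on_def by (metis Ck_on.simps(1))

lemma Cinf_on_imp_partially_differentiable_on: "Cinf_on W f \<Longrightarrow> partially_differentiable_on W f"
  unfolding Cinf_on_def by (metis Ck_on_SucD)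

lemma Cinf_on_subset: "Cinf_on W f \<Longrightarrow> V \<subseteq> W \<Longrightarrow> Cinf_on V f"
  by (auto simp: Cinf_on_def Ck_on_subset)

lemma pt_const [simp]: "pt (\<lambda>p. c::real) = (\<lambda>p. 0)"
  by (auto simp: pt_def)

lemma ps_const [simp]: "ps (\<lambda>p. c::real) = (\<lambda>p. 0)"
  by (auto simp: ps_def)

lemma Ck_on_const: "Ck_on k W (\<lambda>p. c)"
  by (induction k arbitrary: c) (auto simp: partially_differentiable_on_def intro!: Ck_on_SucI)

lemma Cinf_on_const: "Cinf_on W (\<lambda>p. c)"
  by (simp add: Cinf_on_def Ck_on_const)

lemma Cinf_on_fst: "Cinf_on W fst"
proof -
  have "pt fst p = (1::real)" "ps fst p = (0::real)" for p :: "real \<times> real"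
    by (cases p; auto intro!: pt_eqI ps_eqI derivative_eq_intros)+
  then have "pt fst = (\<lambda>p. 1)" "ps fst = (\<lambda>p. 0)"
    by auto
  then have "Ck_on k W fst" for k
    by (cases k) (auto simp: Ck_on_const partially_differentiable_on_def intro!: continuous_intros Ck_on_SucI)
  then show ?thesis by (simp add: Cinf_on_def)
qed

lemma pt_add:
  "partially_differentiable_on W f \<Longrightarrow> partially_differentiable_on W g \<Longrightarrow> p \<in> W \<Longrightarrow>
     pt (\<lambda>p. f p + g p) p = pt f p + pt g p"
  by (cases p) (auto simp: partially_differentiable_on_def intro!: pt_eqI derivative_eq_intros has_real_derivative_pt)

lemma ps_add:
  "partially_differentiable_on W f \<Longrightarrow> partially_differentiable_on W g \<Longrightarrow> p \<in> W \<Longrightarrow>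
     ps (\<lambda>p. f p + g p) p = ps f p + ps g p"
  by (cases p) (auto simp: partially_differentiable_on_def intro!: ps_eqI derivative_eq_intros has_real_derivative_ps)

lemma pt_mult:
  "partially_differentiable_on W f \<Longrightarrow> partially_differentiable_on W g \<Longrightarrow> p \<in> W \<Longrightarrow>
     pt (\<lambda>p. f p * g p) p = pt f p * g p + f p * pt g p"
  by (cases p) (auto simp: partially_differentiable_on_def intro!: pt_eqI derivative_eq_intros has_real_derivative_pt)

lemma ps_mult:
  "partially_differentiable_on W f \<Longrightarrow> partially_differentiable_on W g \<Longrightarrow> p \<in> W \<Longrightarrow>
     ps (\<lambda>p. f p * g p) p = ps f p * g p + f p * ps g p"
  by (cases p) (auto simp: partially_differentiable_on_def intro!: ps_eqI derivative_eq_intros has_real_derivative_ps)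

lemma pt_uminus:
  "partially_differentiable_on W f \<Longrightarrow> p \<in> W \<Longrightarrow> pt (\<lambda>p. - f p) p = - pt f p"
  by (cases p) (auto simp: partially_differentiable_on_def intro!: pt_eqI derivative_eq_intros has_real_derivative_pt)

lemma ps_uminus:
  "partially_differentiable_on W f \<Longrightarrow> p \<in> W \<Longrightarrow> ps (\<lambda>p. - f p) p = - ps f p"
  by (cases p) (auto simp: partially_differentiable_on_def intro!: ps_eqI derivative_eq_intros has_real_derivative_ps)

lemma pt_inverse:
  "partially_differentiable_on W f \<Longrightarrow> p \<in> W \<Longrightarrow> f p \<noteq> 0 \<Longrightarrow>
     pt (\<lambda>p. inverse (f p)) p = - pt f p * (inverse (f p) * inverse (f p))"
  by (cases p) (auto simp: partially_differentiable_on_def intro!: pt_eqI derivative_eq_intros has_real_derivative_pt)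

lemma ps_inverse:
  "partially_differentiable_on W f \<Longrightarrow> p \<in> W \<Longrightarrow> f p \<noteq> 0 \<Longrightarrow>
     ps (\<lambda>p. inverse (f p)) p = - ps f p * (inverse (f p) * inverse (f p))"
  by (cases p) (auto simp: partially_differentiable_on_def intro!: ps_eqI derivative_eq_intros has_real_derivative_ps)

lemma partially_differentiable_on_inverse:
  assumes "partially_differentiable_on W f" "\<And>p. p \<in> W \<Longrightarrow> f p \<noteq> 0"
  shows "partially_differentiable_on W (\<lambda>p. inverse (f p))"
proof -
  have "(\<lambda>x. inverse (u x)) differentiable at a"
    if "u differentiable at a" "u a \<noteq> 0" for u :: "real \<Rightarrow> real" and a
    using that by (auto simp: real_differentiable_def intro!: derivative_eq_intros)
  then show ?thesis using assms unfolding partially_differentiable_on_def by blast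
qed

lemma Ck_on_add:
  assumes "open W" shows "Ck_on k W f \<Longrightarrow> Ck_on k W g \<Longrightarrow> Ck_on k W (\<lambda>p. f p + g p)"
proof (induction k arbitrary: f g)
  case 0 then show ?case by (auto intro!: continuous_intros)
next
  case (Suc k)
  note F = Ck_on_SucD[OF Suc.prems(1)] and G = Ck_on_SucD[OF Suc.prems(2)]
  have "Ck_on k W (pt (\<lambda>p. f p + g p))"
    by (rule Ck_on_cong[OF assms, of "\<lambda>p. pt f p + pt g p"]) (use F G pt_add Suc.IH in auto)
  moreover have "Ck_on k W (ps (\<lambda>p. f p + g p))"
    by (rule Ck_on_cong[OF assms, of "\<lambda>p. ps f p + ps g p"]) (use F G ps_add Suc.IH in auto)
  ultimately show ?case using F G
    by (intro Ck_on_SucI) (auto simp: partially_differentiable_on_def intro!: continuous_intros)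
qed

lemma Ck_on_uminus:
  assumes "open W" shows "Ck_on k W f \<Longrightarrow> Ck_on k W (\<lambda>p. - f p)"
proof (induction k arbitrary: f)
  case 0 then show ?case by (auto intro!: continuous_intros)
next
  case (Suc k)
  note F = Ck_on_SucD[OF Suc.prems(1)]
  have "Ck_on k W (pt (\<lambda>p. - f p))"
    by (rule Ck_on_cong[OF assms, of "\<lambda>p. - pt f p"]) (use F pt_uminus Suc.IH in auto)
  moreover have "Ck_on k W (ps (\<lambda>p. - f p))"
    by (rule Ck_on_cong[OF assms, of "\<lambda>p. - ps f p"]) (use F ps_uminus Suc.IH in auto)
  ultimately show ?case using F
    by (intro Ck_on_SucI) (auto simp: partially_differentiable_on_def intro!: continuous_intros)
qed

lemma Ck_on_mult:
  assumes "open W" shows "Ck_on k W f \<Longrightarrow> Ck_on k W g \<Longrightarrow> Ck_on k W (\<lambda>p. f p * g p)"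
proof (induction k arbitrary: f g)
  case 0 then show ?case by (auto intro!: continuous_intros)
next
  case (Suc k)
  note F = Ck_on_SucD[OF Suc.prems(1)] and G = Ck_on_SucD[OF Suc.prems(2)]
  note f = Ck_on_Suc_imp_Ck_on[OF Suc.prems(1)] and g = Ck_on_Suc_imp_Ck_on[OF Suc.prems(2)]
  have "Ck_on k W (pt (\<lambda>p. f p * g p))"
    by (rule Ck_on_cong[OF assms, of "\<lambda>p. pt f p * g p + f p * pt g p"])
       (use F G pt_mult f g in \<open>auto intro!: Ck_on_add[OF assms] Suc.IH\<close>)
  moreover have "Ck_on k W (ps (\<lambda>p. f p * g p))"
    by (rule Ck_on_cong[OF assms, of "\<lambda>p. ps f p * g p + f p * ps g p"])
       (use F G ps_mult f g in \<open>auto intro!: Ck_on_add[OF assms] Suc.IH\<close>)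
  ultimately show ?case using F G
    by (intro Ck_on_SucI) (auto simp: partially_differentiable_on_def intro!: continuous_intros)
qed

lemma Ck_on_inverse:
  assumes "open W"
  shows "Ck_on k W f \<Longrightarrow> (\<And>p. p \<in> W \<Longrightarrow> f p \<noteq> 0) \<Longrightarrow> Ck_on k W (\<lambda>p. inverse (f p))"
proof (induction k arbitrary: f)
  case 0 then show ?case by (auto intro!: continuous_intros)
next
  case (Suc k)
  note F = Ck_on_SucD[OF Suc.prems(1)]
  have inv: "Ck_on k W (\<lambda>p. inverse (f p))"
    using Suc.IH[OF Ck_on_Suc_imp_Ck_on[OF Suc.prems(1)]] Suc.prems(2) by blast
  have "Ck_on k W (pt (\<lambda>p. inverse (f p)))"
    by (rule Ck_on_cong[OF assms, of "\<lambda>p. - pt f p * (inverse (f p) * inverse (f p))"])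
       (use F pt_inverse Suc.prems(2) inv in \<open>auto intro!: Ck_on_mult[OF assms] Ck_on_uminus[OF assms]\<close>)
  moreover have "Ck_on k W (ps (\<lambda>p. inverse (f p)))"
    by (rule Ck_on_cong[OF assms, of "\<lambda>p. - ps f p * (inverse (f p) * inverse (f p))"])
       (use F ps_inverse Suc.prems(2) inv in \<open>auto intro!: Ck_on_mult[OF assms] Ck_on_uminus[OF assms]\<close>)
  ultimately show ?case using F Suc.prems(2)
    by (intro Ck_on_SucI) (auto intro!: continuous_intros partially_differentiable_on_inverse)
qed

lemma Cinf_on_add: "open W \<Longrightarrow> Cinf_on W f \<Longrightarrow> Cinf_on W g \<Longrightarrow> Cinf_on W (\<lambda>p. f p + g p)"
  by (simp add: Cinf_on_def Ck_on_add)

lemma Cinf_on_mult: "open W \<Longrightarrow> Cinf_on W f \<Longrightarrow> Cinf_on W g \<Longrightarrow> Cinf_on W (\<lambda>p. f p * g p)"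
  by (simp add: Cinf_on_def Ck_on_mult)

lemma Cinf_on_uminus: "open W \<Longrightarrow> Cinf_on W f \<Longrightarrow> Cinf_on W (\<lambda>p. - f p)"
  by (simp add: Cinf_on_def Ck_on_uminus)

lemma Cinf_on_diff: "open W \<Longrightarrow> Cinf_on W f \<Longrightarrow> Cinf_on W g \<Longrightarrow> Cinf_on W (\<lambda>p. f p - g p)"
  using Cinf_on_add[of W f "\<lambda>p. - g p"] Cinf_on_uminus[of W g] by simp

lemma Cinf_on_divide:
  "open W \<Longrightarrow> Cinf_on W f \<Longrightarrow> Cinf_on W g \<Longrightarrow> (\<And>p. p \<in> W \<Longrightarrow> g p \<noteq> 0) \<Longrightarrow> Cinf_on W (\<lambda>p. f p / g p)"
  using Cinf_on_mult[of W f "\<lambda>p. inverse (g p)"] by (simp add: Cinf_on_def Ck_on_inverse divide_inverse)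

lemma pt_add_Cinf_on:
  "Cinf_on W f \<Longrightarrow> Cinf_on W g \<Longrightarrow> p \<in> W \<Longrightarrow> pt (\<lambda>p. f p + g p) p = pt f p + pt g p"
  by (rule pt_add[OF Cinf_on_imp_partially_differentiable_on Cinf_on_imp_partially_differentiable_on])

lemma ps_add_Cinf_on:
  "Cinf_on W f \<Longrightarrow> Cinf_on W g \<Longrightarrow> p \<in> W \<Longrightarrow> ps (\<lambda>p. f p + g p) p = ps f p + ps g p"
  by (rule ps_add[OF Cinf_on_imp_partially_differentiable_on Cinf_on_imp_partially_differentiable_on])

lemma pt_mult_Cinf_on:
  "Cinf_on W f \<Longrightarrow> Cinf_on W g \<Longrightarrow> p \<in> W \<Longrightarrow>
    pt (\<lambda>p. f p * g p) p = pt f p * g p + f p * pt g p"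
  by (rule pt_mult[OF Cinf_on_imp_partially_differentiable_on Cinf_on_imp_partially_differentiable_on])

lemma ps_mult_Cinf_on:
  "Cinf_on W f \<Longrightarrow> Cinf_on W g \<Longrightarrow> p \<in> W \<Longrightarrow>
    ps (\<lambda>p. f p * g p) p = ps f p * g p + f p * ps g p"
  by (rule ps_mult[OF Cinf_on_imp_partially_differentiable_on Cinf_on_imp_partially_differentiable_on])

lemma pt_uminus_Cinf_on:
  "Cinf_on W f \<Longrightarrow> p \<in> W \<Longrightarrow> pt (\<lambda>p. - f p) p = - pt f p"
  by (rule pt_uminus[OF Cinf_on_imp_partially_differentiable_on])

lemma ps_uminus_Cinf_on:
  "Cinf_on W f \<Longrightarrow> p \<in> W \<Longrightarrow> ps (\<lambda>p. - f p) p = - ps f p"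
  by (rule ps_uminus[OF Cinf_on_imp_partially_differentiable_on])

lemma pt_diff_Cinf_on:
  "open W \<Longrightarrow> Cinf_on W f \<Longrightarrow> Cinf_on W g \<Longrightarrow> p \<in> W \<Longrightarrow> pt (\<lambda>p. f p - g p) p = pt f p - pt g p"
  and ps_diff_Cinf_on:
  "open W \<Longrightarrow> Cinf_on W f \<Longrightarrow> Cinf_on W g \<Longrightarrow> p \<in> W \<Longrightarrow> ps (\<lambda>p. f p - g p) p = ps f p - ps g p"
  using pt_add_Cinf_on[of W f "\<lambda>p. - g p" p] ps_add_Cinf_on[of W f "\<lambda>p. - g p" p]
    pt_uminus_Cinf_on[of W g p] ps_uminus_Cinf_on[of W g p] Cinf_on_uminus[of W g] by simp_all

lemmas Cinf_on_intros =
  Cinf_on_add Cinf_on_mult Cinf_on_uminus Cinf_on_diff Cinf_on_divide Cinf_on_pt Cinf_on_ps Cinf_on_const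

section \<open>First-order calculus: chain rule and symmetry of mixed partials\<close>

lemma dist_Pair_le: "dist (a, b) (c, d) \<le> dist a c + dist b d"
  by (simp add: dist_Pair_Pair del: sqrt_le_D) (rule sqrt_sum_squares_le_sum; simp)

lemma eventually_nhds_Pair_box:
  fixes x y :: real
  assumes "eventually P (nhds (x,y))"
  obtains r where "r > 0" "\<And>u v. \<bar>u - x\<bar> \<le> r \<Longrightarrow> \<bar>v - y\<bar> \<le> r \<Longrightarrow> P (u,v)"
proof -
  obtain d where d: "d > 0" "\<And>q. dist q (x,y) < d \<Longrightarrow> P q"
    using assms unfolding eventually_nhds_metric by blast
  have "P (u,v)" if "\<bar>u - x\<bar> \<le> d/3" "\<bar>v - y\<bar> \<le> d/3" for u v
  proof (rule d(2))
    have "dist (u,v) (x,y) \<le> \<bar>u - x\<bar> + \<bar>v - y\<bar>"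
      using dist_Pair_le[of u v x y] by (simp add: dist_real_def)
    with that d(1) show "dist (u,v) (x,y) < d" by linarith
  qed
  with d(1) show thesis by (intro that[of "d/3"]) auto
qed

lemma open_Pair_box:
  fixes x y :: real
  assumes "open W" "(x,y) \<in> W"
  obtains r where "r > 0" "\<And>u v. \<bar>u - x\<bar> \<le> r \<Longrightarrow> \<bar>v - y\<bar> \<le> r \<Longrightarrow> (u,v) \<in> W"
  using eventually_nhds_Pair_box[OF eventually_nhds_in_open[OF assms]] by blast

lemma Ck_on_1_has_derivative:
  assumes W: "open W" and g: "Ck_on 1 W g" and p: "(x,y) \<in> W"
  shows "(g has_derivative (\<lambda>(h,k). pt g (x,y) * h + ps g (x,y) * k)) (at (x,y))"
proof -
  note G = Ck_on_SucD[OF g[unfolded One_nat_def]]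
  obtain r where r: "r > 0" "\<And>u v. \<bar>u - x\<bar> \<le> r \<Longrightarrow> \<bar>v - y\<bar> \<le> r \<Longrightarrow> (u,v) \<in> W"
    using open_Pair_box[OF W p] by blast
  define X where "X = ball x r"
  define Y where "Y = ball y r"
  have XY: "X \<times> Y \<subseteq> W" using r(2) by (force simp: X_def Y_def dist_real_def abs_minus_commute)
  have xy: "(x,y) \<in> X \<times> Y" using r(1) by (simp add: X_def Y_def)
  have fx: "((\<lambda>a. g (a,y)) has_derivative (\<lambda>h. pt g (x,y) * h)) (at x within X)"
    using has_real_derivative_pt[of g y x] G p
    unfolding partially_differentiable_on_def has_field_derivative_def
    by (auto intro: has_derivative_at_withinI)
  have fy: "((\<lambda>b. g (a,b)) has_derivative blinfun_apply (blinfun_mult_right (ps g (a,b)))) (at b within Y)"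
    if "a \<in> X" "b \<in> Y" for a b
    using has_real_derivative_ps[of g a b] G XY that
    unfolding partially_differentiable_on_def has_field_derivative_def
    by (auto intro: has_derivative_at_withinI)
  have "continuous (at (x,y)) (ps g)"
    using Ck_on_imp_continuous_on[of 0 W "ps g"] G W p by (simp add: continuous_on_eq_continuous_at)
  then have "continuous (at (x,y)) (\<lambda>q. blinfun_mult_right (ps g q))"
    by (rule continuous_at_compose[unfolded o_def])
       (auto intro!: linear_continuous_at bounded_linear_blinfun_mult_right)
  then have fyc: "continuous (at (x,y) within X \<times> Y) (\<lambda>(a,b). blinfun_mult_right (ps g (a,b)))"
    by (auto intro: continuous_at_imp_continuous_at_within simp: case_prod_unfold)
  have "((\<lambda>(a,b). g (a,b)) has_derivative
      (\<lambda>(h,k). pt g (x,y) * h + blinfun_mult_right (ps g (x,y)) k)) (at (x,y) within X \<times> Y)"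
    by (rule has_derivative_partialsI[where f="\<lambda>a b. g (a,b)", OF fx fy fyc])
       (use r in \<open>auto simp: X_def Y_def\<close>)
  then show ?thesis
    using at_within_open[OF xy] by (simp add: case_prod_unfold X_def Y_def open_Times)
qed

lemma has_real_derivative_along_graph:
  assumes W: "open W" and g: "Cinf_on W g" and p: "(T s, s) \<in> W"
    and T: "(T has_real_derivative T') (at s)"
  shows "((\<lambda>s. g (T s, s)) has_real_derivative pt g (T s, s) * T' + ps g (T s, s)) (at s)"
proof -
  have "((\<lambda>s. (T s, s)) has_derivative (\<lambda>k. (T' * k, k))) (at s)"
    using T unfolding has_field_derivative_def by (auto intro!: derivative_eq_intros)
  from has_derivative_compose[OF this Ck_on_1_has_derivative[OF W _ p]] g
  have "((\<lambda>s. g (T s, s)) has_derivative (\<lambda>k. pt g (T s, s) * (T' * k) + ps g (T s, s) * k)) (at s)"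
    by (simp add: Cinf_on_def)
  then show ?thesis unfolding has_field_derivative_def
    by (rule has_derivative_eq_rhs) (auto simp: algebra_simps)
qed

text \<open>Expanding the double difference of \<open>g\<close> over \<open>[a,a+h]\<times>[b,b+h]\<close> by the mean value
  theorem in either order.\<close>

lemma mixed_partials_MVT:
  fixes g :: "real \<times> real \<Rightarrow> real"
  assumes h: "h > 0" and dg: "\<And>u v. a \<le> u \<Longrightarrow> u \<le> a + h \<Longrightarrow> b \<le> v \<Longrightarrow> v \<le> b + h \<Longrightarrow>
      ((\<lambda>\<tau>. g (\<tau>,v)) has_real_derivative pt g (u,v)) (at u) \<and>
      ((\<lambda>\<sigma>. g (u,\<sigma>)) has_real_derivative ps g (u,v)) (at v) \<and>
      ((\<lambda>\<sigma>. pt g (u,\<sigma>)) has_real_derivative ps (pt g) (u,v)) (at v) \<and>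
      ((\<lambda>\<tau>. ps g (\<tau>,v)) has_real_derivative pt (ps g) (u,v)) (at u)"
  obtains \<xi> \<eta> \<xi>' \<eta>' where "\<xi> \<in> {a<..<a+h}" "\<eta> \<in> {b<..<b+h}" "\<xi>' \<in> {a<..<a+h}" "\<eta>' \<in> {b<..<b+h}"
    "ps (pt g) (\<xi>,\<eta>) = pt (ps g) (\<xi>',\<eta>')"
proof -
  have "((\<lambda>\<tau>. g (\<tau>,b+h) - g (\<tau>,b)) has_real_derivative pt g (x,b+h) - pt g (x,b)) (at x)"
    if "a \<le> x" "x \<le> a + h" for x
    using that h dg by (auto intro!: derivative_eq_intros)
  from MVT2[of a "a+h", OF _ this] h obtain \<xi> where \<xi>: "a < \<xi>" "\<xi> < a + h"
    "(g (a+h,b+h) - g (a+h,b)) - (g (a,b+h) - g (a,b)) = h * (pt g (\<xi>,b+h) - pt g (\<xi>,b))"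
    by auto
  have "((\<lambda>\<sigma>. pt g (\<xi>,\<sigma>)) has_real_derivative ps (pt g) (\<xi>,x)) (at x)" if "b \<le> x" "x \<le> b + h" for x
    using that \<xi> dg by auto
  from MVT2[of b "b+h", OF _ this] h obtain \<eta> where \<eta>: "b < \<eta>" "\<eta> < b + h"
    "pt g (\<xi>,b+h) - pt g (\<xi>,b) = h * ps (pt g) (\<xi>,\<eta>)"
    by auto
  have "((\<lambda>\<sigma>. g (a+h,\<sigma>) - g (a,\<sigma>)) has_real_derivative ps g (a+h,x) - ps g (a,x)) (at x)"
    if "b \<le> x" "x \<le> b + h" for x
    using that h dg by (auto intro!: derivative_eq_intros)
  from MVT2[of b "b+h", OF _ this] h obtain \<eta>' where \<eta>': "b < \<eta>'" "\<eta>' < b + h"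
    "(g (a+h,b+h) - g (a,b+h)) - (g (a+h,b) - g (a,b)) = h * (ps g (a+h,\<eta>') - ps g (a,\<eta>'))"
    by auto
  have "((\<lambda>\<tau>. ps g (\<tau>,\<eta>')) has_real_derivative pt (ps g) (x,\<eta>')) (at x)" if "a \<le> x" "x \<le> a + h" for x
    using that \<eta>' dg by auto
  from MVT2[of a "a+h", OF _ this] h obtain \<xi>' where \<xi>': "a < \<xi>'" "\<xi>' < a + h"
    "ps g (a+h,\<eta>') - ps g (a,\<eta>') = h * pt (ps g) (\<xi>',\<eta>')"
    by auto
  have "h * (h * ps (pt g) (\<xi>,\<eta>)) = h * (h * pt (ps g) (\<xi>',\<eta>'))"
    using \<xi>(3) \<eta>(3) \<eta>'(3) \<xi>'(3) by (simp add: algebra_simps)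
  then show thesis using that[of \<xi> \<eta> \<xi>' \<eta>'] h \<xi> \<eta> \<xi>' \<eta>' by simp
qed

lemma Ck_on_2_mixed_partials_commute:
  assumes W: "open W" and g: "Ck_on 2 W g" and p: "(a,b) \<in> W"
  shows "ps (pt g) (a,b) = pt (ps g) (a,b)"
proof (rule ccontr)
  define A where "A = ps (pt g) (a,b)"
  define B where "B = pt (ps g) (a,b)"
  assume "ps (pt g) (a,b) \<noteq> pt (ps g) (a,b)"
  then have d: "\<bar>A - B\<bar> > 0" by (simp add: A_def B_def)
  note G = Ck_on_SucD[OF g[unfolded numeral_2_eq_2]]
  note Gt = Ck_on_SucD[OF conjunct1[OF conjunct2[OF conjunct2[OF G]]]]
  note Gs = Ck_on_SucD[OF conjunct2[OF conjunct2[OF conjunct2[OF G]]]]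
  have "isCont (ps (pt g)) (a,b)" "isCont (pt (ps g)) (a,b)"
    using Gt Gs W p by (auto simp: continuous_on_eq_continuous_at dest: Ck_on_imp_continuous_on)
  then have "(ps (pt g) \<longlongrightarrow> A) (nhds (a,b))" "(pt (ps g) \<longlongrightarrow> B) (nhds (a,b))"
    by (simp_all add: A_def B_def isCont_def tendsto_at_iff_tendsto_nhds)
  then have "eventually (\<lambda>q. dist (ps (pt g) q) A < \<bar>A - B\<bar>/2) (nhds (a,b))"
    "eventually (\<lambda>q. dist (pt (ps g) q) B < \<bar>A - B\<bar>/2) (nhds (a,b))"
    using d by (blast intro: tendstoD half_gt_zero)+
  with eventually_nhds_in_open[OF W p]
  have "eventually (\<lambda>q. q \<in> W \<and> \<bar>ps (pt g) q - A\<bar> < \<bar>A - B\<bar>/2 \<and> \<bar>pt (ps g) q - B\<bar> < \<bar>A - B\<bar>/2) (nhds (a,b))"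
    by eventually_elim (simp add: dist_real_def)
  then obtain h where h: "h > 0" and box: "\<And>u v. \<bar>u - a\<bar> \<le> h \<Longrightarrow> \<bar>v - b\<bar> \<le> h \<Longrightarrow>
      (u,v) \<in> W \<and> \<bar>ps (pt g) (u,v) - A\<bar> < \<bar>A - B\<bar>/2 \<and> \<bar>pt (ps g) (u,v) - B\<bar> < \<bar>A - B\<bar>/2"
    by (rule eventually_nhds_Pair_box) blast
  have "((\<lambda>\<tau>. g (\<tau>,v)) has_real_derivative pt g (u,v)) (at u) \<and>
      ((\<lambda>\<sigma>. g (u,\<sigma>)) has_real_derivative ps g (u,v)) (at v) \<and>
      ((\<lambda>\<sigma>. pt g (u,\<sigma>)) has_real_derivative ps (pt g) (u,v)) (at v) \<and>
      ((\<lambda>\<tau>. ps g (\<tau>,v)) has_real_derivative pt (ps g) (u,v)) (at u)"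
    if "a \<le> u" "u \<le> a + h" "b \<le> v" "v \<le> b + h" for u v
    using box[of u v] that G Gt Gs
    by (auto simp: partially_differentiable_on_def intro!: has_real_derivative_pt has_real_derivative_ps)
  from mixed_partials_MVT[OF h this] obtain \<xi> \<eta> \<xi>' \<eta>'
    where pts: "\<xi> \<in> {a<..<a+h}" "\<eta> \<in> {b<..<b+h}" "\<xi>' \<in> {a<..<a+h}" "\<eta>' \<in> {b<..<b+h}"
    and eq: "ps (pt g) (\<xi>,\<eta>) = pt (ps g) (\<xi>',\<eta>')"
    by blast
  have "\<bar>ps (pt g) (\<xi>,\<eta>) - A\<bar> < \<bar>A - B\<bar>/2" "\<bar>pt (ps g) (\<xi>',\<eta>') - B\<bar> < \<bar>A - B\<bar>/2"
    using box[of \<xi> \<eta>] box[of \<xi>' \<eta>'] pts by auto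
  with eq show False by (simp add: abs_if split: if_splits; linarith)
qed

lemma Cinf_on_mixed_partials_commute:
  "open W \<Longrightarrow> Cinf_on W g \<Longrightarrow> p \<in> W \<Longrightarrow> ps (pt g) p = pt (ps g) p"
  using Ck_on_2_mixed_partials_commute[of W g "fst p" "snd p"] by (simp add: Cinf_on_def)

section \<open>The implicit function theorem for a zero curve \<open>t = T(s)\<close>\<close>

lemma MVT_between:
  fixes f f' :: "real \<Rightarrow> real"
  assumes "\<And>x. min a b \<le> x \<Longrightarrow> x \<le> max a b \<Longrightarrow> (f has_real_derivative f' x) (at x)"
  shows "\<exists>z. min a b \<le> z \<and> z \<le> max a b \<and> f b - f a = (b - a) * f' z"
proof (cases a b rule: linorder_cases)
  case less
  then obtain z where "a < z" "z < b" "f b - f a = (b - a) * f' z"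
    using MVT2[of a b f f'] assms by (force simp: min_def max_def)
  then show ?thesis using less by (intro exI[of _ z]) (auto simp: min_def max_def)
next
  case equal then show ?thesis by auto
next
  case greater
  then obtain z where "b < z" "z < a" "f a - f b = (a - b) * f' z"
    using MVT2[of b a f f'] assms by (force simp: min_def max_def)
  then show ?thesis using greater by (intro exI[of _ z]) (auto simp: algebra_simps min_def max_def)
qed

lemma implicit_difference_quotient:
  fixes H :: "real \<times> real \<Rightarrow> real"
  assumes H: "partially_differentiable_on W H" and box: "{a..b} \<times> {c<..<d} \<subseteq> W"
    and T: "\<And>s. s \<in> {c<..<d} \<Longrightarrow> T s \<in> {a..b} \<and> H (T s, s) = 0"
    and nz: "\<And>p. p \<in> {a..b} \<times> {c<..<d} \<Longrightarrow> pt H p \<noteq> 0"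
    and s: "s \<in> {c<..<d}" "s1 \<in> {c<..<d}" "s \<noteq> s1"
  obtains \<xi> \<eta> where "dist \<xi> (T s1) \<le> dist (T s) (T s1)" "dist \<eta> s1 \<le> dist s s1"
    "(T s - T s1) / (s - s1) = - ps H (T s1, \<eta>) / pt H (\<xi>, s)"
proof -
  have seg: "(t,\<sigma>) \<in> {a..b} \<times> {c<..<d}"
    if "min (T s1) (T s) \<le> t" "t \<le> max (T s1) (T s)" "min s1 s \<le> \<sigma>" "\<sigma> \<le> max s1 s" for t \<sigma>
    using that T[OF s(1)] T[OF s(2)] s by (auto simp: min_def max_def split: if_splits)
  have dHt: "((\<lambda>\<tau>. H (\<tau>,\<sigma>)) has_real_derivative pt H (t,\<sigma>)) (at t)"
    and dHs: "((\<lambda>\<sigma>. H (t,\<sigma>)) has_real_derivative ps H (t,\<sigma>)) (at \<sigma>)"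
    if "(t,\<sigma>) \<in> {a..b} \<times> {c<..<d}" for t \<sigma>
    using H subsetD[OF box that]
    by (auto simp: partially_differentiable_on_def intro!: has_real_derivative_pt has_real_derivative_ps)
  have "((\<lambda>\<tau>. H (\<tau>,s)) has_real_derivative pt H (x,s)) (at x)"
    if "min (T s1) (T s) \<le> x" "x \<le> max (T s1) (T s)" for x
    by (intro dHt seg) (use that in auto)
  from MVT_between[OF this] obtain \<xi> where \<xi>: "min (T s1) (T s) \<le> \<xi>" "\<xi> \<le> max (T s1) (T s)"
     "H (T s, s) - H (T s1, s) = (T s - T s1) * pt H (\<xi>, s)"
    by blast
  have "((\<lambda>\<sigma>. H (T s1,\<sigma>)) has_real_derivative ps H (T s1,x)) (at x)"
    if "min s1 s \<le> x" "x \<le> max s1 s" for x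
    by (intro dHs seg) (use that in auto)
  from MVT_between[OF this] obtain \<eta> where \<eta>: "min s1 s \<le> \<eta>" "\<eta> \<le> max s1 s"
     "H (T s1, s) - H (T s1, s1) = (s - s1) * ps H (T s1, \<eta>)"
    by blast
  have "pt H (\<xi>, s) \<noteq> 0" by (intro nz seg) (use \<xi> in auto)
  then have "(T s - T s1) / (s - s1) = - ps H (T s1, \<eta>) / pt H (\<xi>, s)"
    using \<xi>(3) \<eta>(3) T[OF s(1)] T[OF s(2)] s(3) by (simp add: field_simps)
  moreover have "dist \<xi> (T s1) \<le> dist (T s) (T s1)" "dist \<eta> s1 \<le> dist s s1"
    using \<xi>(1,2) \<eta>(1,2) by (auto simp: dist_real_def min_def max_def split: if_splits)
  ultimately show thesis using that by blast
qed

lemma has_real_derivative_implicit: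
  fixes H :: "real \<times> real \<Rightarrow> real"
  assumes W: "open W" and H: "Ck_on 1 W H" and box: "{a..b} \<times> {c<..<d} \<subseteq> W"
    and s1: "s1 \<in> {c<..<d}" and T: "\<And>s. s \<in> {c<..<d} \<Longrightarrow> T s \<in> {a..b} \<and> H (T s, s) = 0"
    and T_cont: "isCont T s1" and nz: "\<And>p. p \<in> {a..b} \<times> {c<..<d} \<Longrightarrow> pt H p \<noteq> 0"
  shows "(T has_real_derivative - ps H (T s1, s1) / pt H (T s1, s1)) (at s1)"
proof -
  note HH = Ck_on_SucD[OF H[unfolded One_nat_def]]
  define p1 where "p1 = (T s1, s1)"
  have p1: "p1 \<in> {a..b} \<times> {c<..<d}" using T s1 by (simp add: p1_def)
  text \<open>The difference quotient of \<open>T\<close> is \<open>F\<close> evaluated at two points that both tend to \<open>p1\<close>.\<close>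
  define F where "F z = - ps H (snd z) / pt H (fst z)" for z :: "(real \<times> real) \<times> (real \<times> real)"
  have "p1 \<in> W" using box p1 by blast
  moreover have "continuous_on W (pt H)" "continuous_on W (ps H)"
    using HH by simp_all
  ultimately have "isCont (pt H) p1" "isCont (ps H) p1"
    using W by (simp_all add: continuous_on_eq_continuous_at)
  then have "isCont (\<lambda>z. pt H (fst z)) (p1,p1)" "isCont (\<lambda>z. ps H (snd z)) (p1,p1)"
    using continuous_at_compose[of "(p1,p1)" fst "pt H"] continuous_at_compose[of "(p1,p1)" snd "ps H"]
    by (simp_all add: o_def continuous_fst continuous_snd continuous_ident)
  then have F_cont: "isCont F (p1,p1)"
    unfolding F_def using nz[OF p1] by (auto intro!: continuous_divide continuous_minus)
  show ?thesis unfolding has_field_derivative_iff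
  proof (rule metric_LIM_I)
    fix e :: real assume "e > 0"
    with F_cont have "\<exists>\<rho>>0. \<forall>z. dist z (p1,p1) < \<rho> \<longrightarrow> dist (F z) (F (p1,p1)) < e"
      by (simp only: continuous_at_eps_delta)
    then obtain \<rho> where \<rho>: "\<rho> > 0" "\<And>z. dist z (p1,p1) < \<rho> \<Longrightarrow> dist (F z) (F (p1,p1)) < e"
      by blast
    have "\<rho>/3 > 0" using \<rho>(1) by simp
    with T_cont have "\<exists>d1>0. \<forall>s. dist s s1 < d1 \<longrightarrow> dist (T s) (T s1) < \<rho>/3"
      by (simp only: continuous_at_eps_delta)
    then obtain d1 where d1: "d1 > 0" "\<And>s. dist s s1 < d1 \<Longrightarrow> dist (T s) (T s1) < \<rho>/3"
      by blast
    obtain d2 where d2: "d2 > 0" "ball s1 d2 \<subseteq> {c<..<d}"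
      using s1 open_contains_ball_eq[OF open_greaterThanLessThan] by blast
    show "\<exists>r>0. \<forall>s. s \<noteq> s1 \<and> dist s s1 < r \<longrightarrow>
        dist ((T s - T s1) / (s - s1)) (- ps H (T s1, s1) / pt H (T s1, s1)) < e"
    proof (intro exI[of _ "min (\<rho>/3) (min d1 d2)"] conjI allI impI)
      show "min (\<rho>/3) (min d1 d2) > 0" using \<rho> d1 d2 by simp
      fix s assume s: "s \<noteq> s1 \<and> dist s s1 < min (\<rho>/3) (min d1 d2)"
      then have "s \<in> {c<..<d}" "s \<noteq> s1" using d2 by (auto simp: dist_commute)
      from implicit_difference_quotient[OF conjunct1[OF conjunct2[OF HH]] box T nz this(1) s1 this(2)]
      obtain \<xi> \<eta> where \<xi>\<eta>: "dist \<xi> (T s1) \<le> dist (T s) (T s1)" "dist \<eta> s1 \<le> dist s s1"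
        "(T s - T s1) / (s - s1) = - ps H (T s1, \<eta>) / pt H (\<xi>, s)"
        by blast
      have "dist ((\<xi>,s),(T s1,\<eta>)) (p1,p1) \<le> (dist \<xi> (T s1) + dist s s1) + (dist (T s1) (T s1) + dist \<eta> s1)"
        unfolding p1_def by (intro order.trans[OF dist_Pair_le] add_mono dist_Pair_le)
      also have "\<dots> < \<rho>" using \<xi>\<eta>(1,2) d1(2)[of s] s by simp
      finally show "dist ((T s - T s1) / (s - s1)) (- ps H (T s1, s1) / pt H (T s1, s1)) < e"
        using \<rho>(2)[of "((\<xi>,s),(T s1,\<eta>))"] \<xi>\<eta>(3) by (simp add: F_def p1_def)
    qed
  qed
qed

locale t_increasing_box =
  fixes W :: "(real \<times> real) set" and H :: "real \<times> real \<Rightarrow> real" and t0 s0 \<epsilon> :: real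
  assumes open_W: "open W" and partials: "partially_differentiable_on W H" and pos_\<epsilon>: "\<epsilon> > 0"
    and box: "\<And>u v. \<bar>u - t0\<bar> \<le> \<epsilon> \<Longrightarrow> \<bar>v - s0\<bar> \<le> \<epsilon> \<Longrightarrow> (u,v) \<in> W \<and> pt H (u,v) > 0"
begin

definition T :: "real \<Rightarrow> real" where
  "T s = (THE t. \<bar>t - t0\<bar> \<le> \<epsilon> \<and> H (t,s) = 0)"

lemma strict_mono_t:
  assumes "\<bar>s - s0\<bar> \<le> \<epsilon>" "t0 - \<epsilon> \<le> a" "a < b" "b \<le> t0 + \<epsilon>"
  shows "H (a,s) < H (b,s)"
proof (rule DERIV_pos_imp_increasing[OF assms(3)])
  fix x assume "a \<le> x" "x \<le> b"
  with assms have "(x,s) \<in> W" "pt H (x,s) > 0" using box[of x s] by auto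
  with partials show "\<exists>y. ((\<lambda>\<tau>. H (\<tau>,s)) has_real_derivative y) (at x) \<and> y > 0"
    by (auto simp: partially_differentiable_on_def intro!: has_real_derivative_pt)
qed

lemma isCont_t: "\<bar>t - t0\<bar> \<le> \<epsilon> \<Longrightarrow> \<bar>s - s0\<bar> \<le> \<epsilon> \<Longrightarrow> isCont (\<lambda>\<tau>. H (\<tau>,s)) t"
  and isCont_s: "\<bar>t - t0\<bar> \<le> \<epsilon> \<Longrightarrow> \<bar>s - s0\<bar> \<le> \<epsilon> \<Longrightarrow> isCont (\<lambda>\<sigma>. H (t,\<sigma>)) s"
  using box[of t s] partials
  by (auto simp: partially_differentiable_on_def intro!: differentiable_imp_continuous_within)

lemma T_eqI:
  assumes s: "\<bar>s - s0\<bar> \<le> \<epsilon>" and t: "\<bar>t - t0\<bar> \<le> \<epsilon>" "H (t,s) = 0"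
  shows "T s = t"
  unfolding T_def
proof (rule the_equality)
  fix t' assume t': "\<bar>t' - t0\<bar> \<le> \<epsilon> \<and> H (t',s) = 0"
  show "t' = t"
  proof (rule ccontr)
    assume "t' \<noteq> t"
    then consider "t < t'" | "t' < t" by linarith
    then show False
    proof cases
      case 1 with strict_mono_t[OF s, of t t'] t t' show False by (simp add: abs_le_iff)
    next
      case 2 with strict_mono_t[OF s, of t' t] t t' show False by (simp add: abs_le_iff)
    qed
  qed
qed (use t in auto)

lemma T_in_bracket:
  assumes s: "\<bar>s - s0\<bar> \<le> \<epsilon>" and ab: "t0 - \<epsilon> \<le> a" "a < b" "b \<le> t0 + \<epsilon>"
    and sign: "H (a,s) < 0" "0 < H (b,s)"
  shows "a < T s \<and> T s < b \<and> H (T s, s) = 0"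
proof -
  have "\<forall>x. a \<le> x \<and> x \<le> b \<longrightarrow> isCont (\<lambda>\<tau>. H (\<tau>,s)) x"
    using ab s by (auto intro!: isCont_t)
  then obtain t where t: "a \<le> t" "t \<le> b" "H (t,s) = 0"
    using IVT[of "\<lambda>\<tau>. H (\<tau>,s)" a 0 b] sign ab by auto
  then have "T s = t" using ab by (intro T_eqI[OF s]) auto
  moreover have "t \<noteq> a" "t \<noteq> b" using t sign by auto
  ultimately show ?thesis using t by auto
qed

lemma bracket_persists:
  assumes s1: "\<bar>s1 - s0\<bar> \<le> \<epsilon>" and e: "e > 0" "t0 - \<epsilon> \<le> t1 - e" "t1 + e \<le> t0 + \<epsilon>"
    and zero: "H (t1,s1) = 0"
  obtains d where "d > 0" "\<And>s. \<bar>s - s1\<bar> < d \<Longrightarrow> H (t1 - e, s) < 0 \<and> 0 < H (t1 + e, s)"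
proof -
  have neg: "H (t1 - e, s1) < 0" and pos: "0 < H (t1 + e, s1)"
    using strict_mono_t[OF s1, of "t1 - e" t1] strict_mono_t[OF s1, of t1 "t1 + e"] e zero by auto
  have "\<bar>t1 - e - t0\<bar> \<le> \<epsilon>" "\<bar>t1 + e - t0\<bar> \<le> \<epsilon>" using e by auto
  note cont = isCont_s[OF this(1) s1, unfolded isCont_def] isCont_s[OF this(2) s1, unfolded isCont_def]
  obtain d1 where d1: "d1 > 0" "\<And>s. s \<noteq> s1 \<Longrightarrow> \<bar>s1 - s\<bar> < d1 \<Longrightarrow> H (t1 - e, s) < 0"
    using LIM_fun_less_zero[OF cont(1) neg] by blast
  obtain d2 where d2: "d2 > 0" "\<And>s. s \<noteq> s1 \<Longrightarrow> \<bar>s1 - s\<bar> < d2 \<Longrightarrow> 0 < H (t1 + e, s)"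
    using LIM_fun_gt_zero[OF cont(2) pos] by blast
  show thesis
  proof (rule that[of "min d1 d2"])
    fix s assume "\<bar>s - s1\<bar> < min d1 d2"
    then show "H (t1 - e, s) < 0 \<and> 0 < H (t1 + e, s)"
      using d1 d2 neg pos by (cases "s = s1") (auto simp: abs_minus_commute)
  qed (use d1 d2 in auto)
qed

lemma isCont_T:
  assumes s1: "\<bar>s1 - s0\<bar> < \<epsilon>" and T1: "\<bar>T s1 - t0\<bar> < \<epsilon>" "H (T s1, s1) = 0"
  shows "isCont T s1"
  unfolding continuous_at_eps_delta
proof (intro allI impI)
  fix e :: real assume "e > 0"
  define e' where "e' = min e (\<epsilon> - \<bar>T s1 - t0\<bar>)"
  have e': "e' > 0" "e' \<le> e" "t0 - \<epsilon> \<le> T s1 - e'" "T s1 + e' \<le> t0 + \<epsilon>"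
    using \<open>e > 0\<close> T1 by (auto simp: e'_def abs_le_iff)
  have "\<bar>s1 - s0\<bar> \<le> \<epsilon>" using s1 by simp
  then obtain d where d: "d > 0" "\<And>s. \<bar>s - s1\<bar> < d \<Longrightarrow> H (T s1 - e', s) < 0 \<and> 0 < H (T s1 + e', s)"
    using bracket_persists[OF _ e'(1,3,4) T1(2)] by blast
  show "\<exists>d>0. \<forall>s. dist s s1 < d \<longrightarrow> dist (T s) (T s1) < e"
  proof (intro exI[of _ "min d (\<epsilon> - \<bar>s1 - s0\<bar>)"] conjI allI impI)
    fix s assume "dist s s1 < min d (\<epsilon> - \<bar>s1 - s0\<bar>)"
    then have "\<bar>s - s0\<bar> \<le> \<epsilon>" "\<bar>s - s1\<bar> < d" by (auto simp: dist_real_def)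
    from T_in_bracket[OF this(1) e'(3) _ e'(4)] d(2)[OF this(2)] e'(1)
    show "dist (T s) (T s1) < e" using e'(2) by (auto simp: dist_real_def)
  qed (use d s1 in auto)
qed

end

lemma implicit_function_pos:
  fixes H :: "real \<times> real \<Rightarrow> real"
  assumes W: "open W" and H: "Ck_on 1 W H" and p0: "(t0,s0) \<in> W" and H0: "H (t0,s0) = 0"
    and pos: "pt H (t0,s0) > 0"
  obtains \<epsilon> \<delta> T where "\<epsilon> > 0" "\<delta> > 0" "{t0-\<epsilon>..t0+\<epsilon>} \<times> {s0-\<delta><..<s0+\<delta>} \<subseteq> W" "T s0 = t0"
    "\<And>s. s \<in> {s0-\<delta><..<s0+\<delta>} \<Longrightarrow> \<bar>T s - t0\<bar> < \<epsilon> \<and> H (T s, s) = 0 \<and> pt H (T s, s) \<noteq> 0 \<and>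
        (T has_real_derivative - ps H (T s, s) / pt H (T s, s)) (at s)"
    "\<And>t s. \<bar>t - t0\<bar> \<le> \<epsilon> \<Longrightarrow> s \<in> {s0-\<delta><..<s0+\<delta>} \<Longrightarrow> H (t,s) = 0 \<longleftrightarrow> t = T s"
proof -
  note HH = Ck_on_SucD[OF H[unfolded One_nat_def]]
  have "continuous_on W (pt H)" using HH by simp
  then have "(pt H \<longlongrightarrow> pt H (t0,s0)) (nhds (t0,s0))"
    using W p0 by (simp add: continuous_on_eq_continuous_at isCont_def tendsto_at_iff_tendsto_nhds)
  from order_tendstoD(1)[OF this pos] have "eventually (\<lambda>p. pt H p > 0) (nhds (t0,s0))" .
  with eventually_nhds_in_open[OF W p0] have "eventually (\<lambda>p. p \<in> W \<and> pt H p > 0) (nhds (t0,s0))"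
    by eventually_elim auto
  then obtain \<epsilon> where "\<epsilon> > 0" "\<And>u v. \<bar>u - t0\<bar> \<le> \<epsilon> \<Longrightarrow> \<bar>v - s0\<bar> \<le> \<epsilon> \<Longrightarrow> (u,v) \<in> W \<and> pt H (u,v) > 0"
    by (rule eventually_nhds_Pair_box) blast
  then interpret t_increasing_box W H t0 s0 \<epsilon>
    using W HH by unfold_locales auto
  obtain d where d: "d > 0" "\<And>s. \<bar>s - s0\<bar> < d \<Longrightarrow> H (t0 - \<epsilon>, s) < 0 \<and> 0 < H (t0 + \<epsilon>, s)"
    using bracket_persists[of s0 \<epsilon> t0, OF _ pos_\<epsilon> order_refl order_refl H0] pos_\<epsilon> by auto
  define \<delta> where "\<delta> = min d \<epsilon>"
  define I where "I = {s0-\<delta><..<s0+\<delta>}"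
  have sI: "\<bar>s - s0\<bar> < \<epsilon>" "\<bar>s - s0\<bar> < d" if "s \<in> I" for s
    using that by (auto simp: I_def \<delta>_def abs_less_iff)
  have T: "\<bar>T s - t0\<bar> < \<epsilon> \<and> H (T s, s) = 0" if "s \<in> I" for s
    using T_in_bracket[of s "t0 - \<epsilon>" "t0 + \<epsilon>"] sI[OF that] d(2) pos_\<epsilon> by (auto simp: abs_less_iff)
  have inbox: "(u,v) \<in> W \<and> pt H (u,v) > 0" if "u \<in> {t0-\<epsilon>..t0+\<epsilon>}" "v \<in> I" for u v
    using sI(1)[OF that(2)] that(1) by (intro box) auto
  then have box_W: "{t0-\<epsilon>..t0+\<epsilon>} \<times> I \<subseteq> W" and box_nz: "\<And>p. p \<in> {t0-\<epsilon>..t0+\<epsilon>} \<times> I \<Longrightarrow> pt H p \<noteq> 0"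
    by fastforce+
  have T_box: "T s \<in> {t0-\<epsilon>..t0+\<epsilon>} \<and> H (T s, s) = 0" if "s \<in> I" for s
    using T[OF that] by (simp add: abs_less_iff)
  have T_deriv: "(T has_real_derivative - ps H (T s, s) / pt H (T s, s)) (at s)" if "s \<in> I" for s
    using has_real_derivative_implicit[OF W H box_W[unfolded I_def] that[unfolded I_def]
        T_box[unfolded I_def] isCont_T[OF sI(1)[OF that] conjunct1[OF T[OF that]] conjunct2[OF T[OF that]]] box_nz[unfolded I_def]] .
  have T_unique: "H (t,s) = 0 \<longleftrightarrow> t = T s" if "\<bar>t - t0\<bar> \<le> \<epsilon>" "s \<in> I" for t s
    using T_eqI[OF _ that(1)] T[OF that(2)] sI(1)[OF that(2)] by auto
  have "T s0 = t0" using T_eqI[of s0 t0] H0 pos_\<epsilon> by simp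
  moreover have "pt H (T s, s) \<noteq> 0" if "s \<in> I" for s
    using box_nz T_box[OF that] that by blast
  ultimately show thesis
    using that[of \<epsilon> \<delta> T] pos_\<epsilon> d(1) box_W T T_deriv T_unique by (simp add: I_def \<delta>_def)
qed

lemma implicit_function:
  fixes H :: "real \<times> real \<Rightarrow> real"
  assumes W: "open W" and H: "Ck_on 1 W H" and p0: "(t0,s0) \<in> W" and H0: "H (t0,s0) = 0"
    and nz: "pt H (t0,s0) \<noteq> 0"
  obtains \<epsilon> \<delta> T where "\<epsilon> > 0" "\<delta> > 0" "{t0-\<epsilon>..t0+\<epsilon>} \<times> {s0-\<delta><..<s0+\<delta>} \<subseteq> W" "T s0 = t0"
    "\<And>s. s \<in> {s0-\<delta><..<s0+\<delta>} \<Longrightarrow> \<bar>T s - t0\<bar> < \<epsilon> \<and> H (T s, s) = 0 \<and> pt H (T s, s) \<noteq> 0 \<and>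
        (T has_real_derivative - ps H (T s, s) / pt H (T s, s)) (at s)"
    "\<And>t s. \<bar>t - t0\<bar> \<le> \<epsilon> \<Longrightarrow> s \<in> {s0-\<delta><..<s0+\<delta>} \<Longrightarrow> H (t,s) = 0 \<longleftrightarrow> t = T s"
proof -
  text \<open>Reduce to \<open>pt H > 0\<close> by replacing \<open>H\<close> with \<open>\<sigma> H\<close>, which has the same zeros and the
    same ratio \<open>ps H / pt H\<close>.\<close>
  define \<sigma> where "\<sigma> = sgn (pt H (t0,s0))"
  have \<sigma>: "\<sigma> \<noteq> 0" "\<sigma> * pt H (t0,s0) > 0" using nz by (auto simp: \<sigma>_def sgn_real_def)
  define G where "G = (\<lambda>p. \<sigma> * H p)"
  have "partially_differentiable_on W H" using Ck_on_SucD[OF H[unfolded One_nat_def]] by simp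
  then have pG: "pt G p = \<sigma> * pt H p" "ps G p = \<sigma> * ps H p" if "p \<in> W" for p
    using pt_mult[of W "\<lambda>p. \<sigma>" H p] ps_mult[of W "\<lambda>p. \<sigma>" H p] that
    by (auto simp: G_def partially_differentiable_on_def)
  have G: "Ck_on 1 W G" unfolding G_def by (rule Ck_on_mult[OF W Ck_on_const H])
  obtain \<epsilon> \<delta> T where *: "\<epsilon> > 0" "\<delta> > 0" "{t0-\<epsilon>..t0+\<epsilon>} \<times> {s0-\<delta><..<s0+\<delta>} \<subseteq> W" "T s0 = t0"
    "\<And>s. s \<in> {s0-\<delta><..<s0+\<delta>} \<Longrightarrow> \<bar>T s - t0\<bar> < \<epsilon> \<and> G (T s, s) = 0 \<and> pt G (T s, s) \<noteq> 0 \<and>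
        (T has_real_derivative - ps G (T s, s) / pt G (T s, s)) (at s)"
    "\<And>t s. \<bar>t - t0\<bar> \<le> \<epsilon> \<Longrightarrow> s \<in> {s0-\<delta><..<s0+\<delta>} \<Longrightarrow> G (t,s) = 0 \<longleftrightarrow> t = T s"
    by (rule implicit_function_pos[OF W G p0]) (use H0 \<sigma> pG p0 in \<open>auto simp: G_def\<close>)
  show thesis
  proof (rule that[of \<epsilon> \<delta> T, OF *(1-4)])
    fix s assume s: "s \<in> {s0-\<delta><..<s0+\<delta>}"
    then have "(T s, s) \<in> W" using *(3,5) by (force simp: abs_less_iff)
    then show "\<bar>T s - t0\<bar> < \<epsilon> \<and> H (T s, s) = 0 \<and> pt H (T s, s) \<noteq> 0 \<and>
        (T has_real_derivative - ps H (T s, s) / pt H (T s, s)) (at s)"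
      using *(5)[OF s] \<sigma>(1) pG by (simp add: G_def)
  next
    fix t s assume "\<bar>t - t0\<bar> \<le> \<epsilon>" "s \<in> {s0-\<delta><..<s0+\<delta>}"
    from *(6)[OF this] \<sigma>(1) show "H (t,s) = 0 \<longleftrightarrow> t = T s" by (simp add: G_def)
  qed
qed

lemma vd_eqI: "(f has_vector_derivative D) (at x) \<Longrightarrow> vd f x = D"
  by (simp add: vd_def vector_derivative_at)

lemma vd_real_eqI: "((f :: real \<Rightarrow> real) has_real_derivative D) (at x) \<Longrightarrow> vd f x = D"
  by (simp add: vd_eqI has_real_derivative_iff_has_vector_derivative)

lemma has_vector_derivative_vd: "f differentiable at x \<Longrightarrow> (f has_vector_derivative vd f x) (at x)"
  by (simp add: vd_def vector_derivative_works[symmetric])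

lemma vd_cong_open: "open I \<Longrightarrow> x \<in> I \<Longrightarrow> (\<And>y. y \<in> I \<Longrightarrow> f y = g y) \<Longrightarrow> vd f x = vd g x"
  unfolding vd_def by (rule vector_derivative_cong_eq) (auto simp: eventually_nhds)

lemma vd_scaleR:
  fixes f :: "real \<Rightarrow> real"
  assumes "f differentiable at x" "g differentiable at x"
  shows "vd (\<lambda>s. f s *\<^sub>R g s) x = vd f x *\<^sub>R g x + f x *\<^sub>R vd g x"
  using has_vector_derivative_scaleR[OF has_vector_derivative_vd[OF assms(1), unfolded
      has_real_derivative_iff_has_vector_derivative[symmetric]] has_vector_derivative_vd[OF assms(2)]]
  by (auto intro!: vd_eqI simp: algebra_simps)

lemma vd_add:
  "f differentiable at x \<Longrightarrow> g differentiable at x \<Longrightarrow> vd (\<lambda>s. f s + g s) x = vd f x + vd g x"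
  by (auto intro!: vd_eqI has_vector_derivative_add has_vector_derivative_vd)

lemma vd_Pair:
  "f differentiable at x \<Longrightarrow> g differentiable at x \<Longrightarrow> vd (\<lambda>s. (f s, g s)) x = (vd f x, vd g x)"
  by (auto intro!: vd_eqI has_vector_derivative_Pair has_vector_derivative_vd)

lemma smooth1_on_differentiable: "smooth1_on I f \<Longrightarrow> x \<in> I \<Longrightarrow> (vd ^^ n) f differentiable at x"
  by (simp add: smooth1_on_def)

lemma higher_vd_eq:
  assumes I: "open I" and D0: "\<And>x. x \<in> I \<Longrightarrow> f x = D 0 x"
    and D: "\<And>n x. x \<in> I \<Longrightarrow> (D n has_vector_derivative D (Suc n) x) (at x)"
  shows "x \<in> I \<Longrightarrow> (vd ^^ n) f x = D n x"
proof (induction n arbitrary: x)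
  case 0 then show ?case using D0 by simp
next
  case (Suc n)
  have "(vd ^^ Suc n) f x = vd (D n) x" using vd_cong_open[OF I Suc.prems Suc.IH] by simp
  also have "\<dots> = D (Suc n) x" by (rule vd_eqI[OF D[OF Suc.prems]])
  finally show ?case .
qed

lemma smooth1_onI:
  assumes I: "open I" and D0: "\<And>x. x \<in> I \<Longrightarrow> f x = D 0 x"
    and D: "\<And>n x. x \<in> I \<Longrightarrow> (D n has_vector_derivative D (Suc n) x) (at x)"
  shows "smooth1_on I f"
  unfolding smooth1_on_def
proof (intro allI ballI)
  fix n x assume x: "x \<in> I"
  have "((vd ^^ n) f has_vector_derivative D (Suc n) x) (at x)"
    by (rule has_vector_derivative_transform_within_open[OF D[OF x] I x])
       (use higher_vd_eq[OF I D0 D] in auto)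
  then show "(vd ^^ n) f differentiable at x" by (rule differentiableI_vector)
qed

lemma smooth1_on_Pair:
  assumes I: "open I" and f: "smooth1_on I f" and g: "smooth1_on I g"
  shows "smooth1_on I (\<lambda>s. (f s, g s))"
  by (rule smooth1_onI[OF I, where D="\<lambda>n s. ((vd ^^ n) f s, (vd ^^ n) g s)"])
     (use f g in \<open>auto intro!: has_vector_derivative_Pair has_vector_derivative_vd smooth1_on_differentiable\<close>)

lemma smooth1_on_linear:
  assumes I: "open I" and L: "bounded_linear L" and f: "smooth1_on I f"
  shows "smooth1_on I (\<lambda>s. L (f s))"
  by (rule smooth1_onI[OF I, where D="\<lambda>n s. L ((vd ^^ n) f s)"])
     (use f in \<open>auto intro!: bounded_linear.has_vector_derivative[OF L] has_vector_derivative_vd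
        smooth1_on_differentiable\<close>)

lemma vec2_eq_iff: "(v :: real^2) = w \<longleftrightarrow> v $ 1 = w $ 1 \<and> v $ 2 = w $ 2"
  by (simp add: vec_eq_iff forall_2)

lemma vec2_expand: "(v :: real^2) = (v $ 1) *\<^sub>R axis 1 1 + (v $ 2) *\<^sub>R axis 2 1"
  by (simp add: vec2_eq_iff axis_def)

lemma smooth1_on_vec2:
  fixes f :: "real \<Rightarrow> real^2"
  assumes I: "open I" and "smooth1_on I (\<lambda>s. f s $ 1)" "smooth1_on I (\<lambda>s. f s $ 2)"
  shows "smooth1_on I f"
proof -
  have "bounded_linear (\<lambda>(a::real, b::real). a *\<^sub>R (axis 1 1 :: real^2) + b *\<^sub>R axis 2 1)"
    by (auto intro!: bounded_linear_intros simp: case_prod_unfold)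
  from smooth1_on_linear[OF I this smooth1_on_Pair[OF assms]] show ?thesis
    by (simp flip: vec2_expand)
qed

lemma has_vector_derivative_vec2:
  fixes f :: "real \<Rightarrow> real^2"
  assumes "((\<lambda>s. f s $ 1) has_real_derivative a) (at x)" "((\<lambda>s. f s $ 2) has_real_derivative b) (at x)"
  shows "(f has_vector_derivative (a *\<^sub>R axis 1 1 + b *\<^sub>R axis 2 1)) (at x)"
proof -
  have "((\<lambda>s. (f s $ 1) *\<^sub>R (axis 1 1 :: real^2) + (f s $ 2) *\<^sub>R axis 2 1) has_vector_derivative
      (a *\<^sub>R axis 1 1 + b *\<^sub>R axis 2 1)) (at x)"
    using assms by (auto intro!: derivative_eq_intros)
  then show ?thesis by (simp flip: vec2_expand)
qed

lemma strict_extremum_at_simple_critical_point: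
  fixes T P :: "real \<Rightarrow> real"
  assumes I: "open I" "s0 \<in> I" and T: "\<And>s. s \<in> I \<Longrightarrow> (T has_real_derivative P s) (at s)"
    and P0: "P s0 = 0" and P': "(P has_real_derivative L) (at s0)" and L: "L \<noteq> 0"
  obtains d where "d > 0" "\<And>s. \<bar>s - s0\<bar> < d \<Longrightarrow> s \<in> I"
    "\<And>s. s \<noteq> s0 \<Longrightarrow> \<bar>s - s0\<bar> < d \<Longrightarrow> P s \<noteq> 0 \<and> L * (T s - T s0) > 0"
proof -
  have "(\<lambda>s. P s / (s - s0)) \<midarrow>s0\<rightarrow> L" using P' P0 by (simp add: has_field_derivative_iff)
  then have "(\<lambda>s. L * (P s / (s - s0))) \<midarrow>s0\<rightarrow> L * L" by (rule tendsto_mult_left)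
  moreover have "0 < L * L" using L by (auto simp: zero_less_mult_iff linorder_neq_iff)
  ultimately obtain r where r: "r > 0" "\<And>s. s \<noteq> s0 \<Longrightarrow> \<bar>s0 - s\<bar> < r \<Longrightarrow> 0 < L * (P s / (s - s0))"
    using LIM_fun_gt_zero by blast
  obtain d0 where d0: "d0 > 0" "ball s0 d0 \<subseteq> I" using I open_contains_ball by blast
  define d where "d = min r d0"
  have inI: "s \<in> I" if "\<bar>s - s0\<bar> < d" for s
    using d0(2) that by (auto simp: d_def dist_real_def)
  have sign: "0 < L * P s * (s - s0)" if "s \<noteq> s0" "\<bar>s - s0\<bar> < d" for s
    using r(2)[of s] that by (auto simp: d_def abs_minus_commute zero_less_divide_iff zero_less_mult_iff)
  show thesis
  proof (rule that[of d])
    fix s assume s: "s \<noteq> s0" "\<bar>s - s0\<bar> < d"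
    have deriv: "\<And>x. min s0 s \<le> x \<Longrightarrow> x \<le> max s0 s \<Longrightarrow> (T has_real_derivative P x) (at x)"
      using s inI T by (auto simp: min_def max_def split: if_splits)
    obtain z where z: "0 < (z - s0) * (s - s0)" "\<bar>z - s0\<bar> < d" "T s - T s0 = (s - s0) * P z"
    proof (cases "s < s0")
      case True
      with MVT2[of s s0 T P] deriv obtain z where z: "s < z" "z < s0" "T s0 - T s = (s0 - s) * P z"
        by (auto simp: min_def max_def)
      have "0 < (z - s0) * (s - s0)" using z by (intro mult_neg_neg) auto
      moreover have "T s - T s0 = (s - s0) * P z" using z(3) by (simp add: algebra_simps)
      ultimately show thesis using z s by (intro that[of z]) auto
    next
      case False
      with s MVT2[of s0 s T P] deriv obtain z where "s0 < z" "z < s" "T s - T s0 = (s - s0) * P z"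
        by (auto simp: min_def max_def)
      with s False show thesis by (intro that[of z]) auto
    qed
    have "z \<noteq> s0" using z(1) by auto
    then have "0 < L * P z * (z - s0)" using sign z(2) by blast
    with z(1) have "0 < (L * P z * (z - s0)) * ((z - s0) * (s - s0))" by simp
    then have "0 < (L * (T s - T s0)) * ((z - s0) * (z - s0))"
      by (simp add: z(3) algebra_simps)
    then show "P s \<noteq> 0 \<and> L * (T s - T s0) > 0"
      using sign[OF s] by (auto simp: zero_less_mult_iff)
  qed (use d0 r inI in \<open>auto simp: d_def\<close>)
qed

text \<open>The \<open>n\<close>-th derivative of \<open>s \<mapsto> g (T s, s)\<close> along any curve with \<open>T' = \<Phi>(T s, s)\<close>,
  as a function on the plane.\<close>

primrec graph_deriv :: "(real \<times> real \<Rightarrow> real) \<Rightarrow> (real \<times> real \<Rightarrow> real) \<Rightarrow> nat \<Rightarrow> real \<times> real \<Rightarrow> real" where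
  "graph_deriv \<Phi> g 0 = g"
| "graph_deriv \<Phi> g (Suc n) = (\<lambda>p. pt (graph_deriv \<Phi> g n) p * \<Phi> p + ps (graph_deriv \<Phi> g n) p)"

lemma Cinf_on_graph_deriv:
  "open W \<Longrightarrow> Cinf_on W \<Phi> \<Longrightarrow> Cinf_on W g \<Longrightarrow> Cinf_on W (graph_deriv \<Phi> g n)"
  by (induction n) (auto intro!: Cinf_on_intros)

lemma smooth1_on_along_graph:
  assumes W: "open W" and \<Phi>: "Cinf_on W \<Phi>" and I: "open I" and g: "Cinf_on W g"
    and T: "\<And>s. s \<in> I \<Longrightarrow> (T s, s) \<in> W \<and> (T has_real_derivative \<Phi> (T s, s)) (at s)"
  shows "smooth1_on I (\<lambda>s. g (T s, s))"
proof (rule smooth1_onI[OF I, where D="\<lambda>n s. graph_deriv \<Phi> g n (T s, s)"])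
  fix n s assume "s \<in> I"
  with has_real_derivative_along_graph[OF W Cinf_on_graph_deriv[OF W \<Phi> g, of n]] T
  show "((\<lambda>s. graph_deriv \<Phi> g n (T s, s)) has_vector_derivative graph_deriv \<Phi> g (Suc n) (T s, s)) (at s)"
    by (simp add: has_real_derivative_iff_has_vector_derivative)
qed simp

lemma pdiff_append: "pdiff (xs @ ys) f = pdiff xs (pdiff ys f)"
  by (induction xs) auto

lemma C_inf_on_pdiff: "C_inf_on \<Omega> \<gamma> \<Longrightarrow> C_inf_on \<Omega> (pdiff bs \<gamma>)"
  unfolding C_inf_on_def by (metis pdiff_append)

lemma C_inf_on_has_vector_derivative_t:
  "C_inf_on \<Omega> \<gamma> \<Longrightarrow> (t,s) \<in> \<Omega> \<Longrightarrow>
     ((\<lambda>\<tau>. pdiff bs \<gamma> (\<tau>,s)) has_vector_derivative pt (pdiff bs \<gamma>) (t,s)) (at t)"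
  unfolding C_inf_on_def pt_Pair using vector_derivative_works by blast

lemma C_inf_on_has_vector_derivative_s:
  "C_inf_on \<Omega> \<gamma> \<Longrightarrow> (t,s) \<in> \<Omega> \<Longrightarrow>
     ((\<lambda>\<sigma>. pdiff bs \<gamma> (t,\<sigma>)) has_vector_derivative ps (pdiff bs \<gamma>) (t,s)) (at s)"
  unfolding C_inf_on_def ps_Pair using vector_derivative_works by blast

lemma has_real_derivative_vec_nth:
  "(f has_vector_derivative D) (at x) \<Longrightarrow> ((\<lambda>y. f y $ i) has_real_derivative D $ i) (at x)"
  using bounded_linear.has_vector_derivative[OF bounded_linear_vec_nth]
  by (simp add: has_real_derivative_iff_has_vector_derivative)

lemma pdiff_vec_nth:
  fixes \<gamma> :: "real \<times> real \<Rightarrow> real^'n"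
  assumes \<Omega>: "open \<Omega>" and \<gamma>: "C_inf_on \<Omega> \<gamma>"
  shows "q \<in> \<Omega> \<Longrightarrow> pdiff bs (\<lambda>p. \<gamma> p $ i) q = pdiff bs \<gamma> q $ i"
proof (induction bs arbitrary: q)
  case Nil then show ?case by simp
next
  case (Cons b bs)
  obtain t s where q: "q = (t,s)" by fastforce
  have IH: "\<And>p. p \<in> \<Omega> \<Longrightarrow> pdiff bs (\<lambda>p. \<gamma> p $ i) p = pdiff bs \<gamma> p $ i" using Cons.IH .
  show ?case
  proof (cases b)
    case True
    have "pt (pdiff bs (\<lambda>p. \<gamma> p $ i)) (t,s) = pt (\<lambda>p. pdiff bs \<gamma> p $ i) (t,s)"
      using pt_cong_open[OF \<Omega> IH] Cons.prems q by simp
    also have "\<dots> = pt (pdiff bs \<gamma>) (t,s) $ i"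
      using has_real_derivative_vec_nth[OF C_inf_on_has_vector_derivative_t[OF \<gamma>]] Cons.prems q
      by (auto intro: pt_eqI)
    finally show ?thesis using True q by simp
  next
    case False
    have "ps (pdiff bs (\<lambda>p. \<gamma> p $ i)) (t,s) = ps (\<lambda>p. pdiff bs \<gamma> p $ i) (t,s)"
      using ps_cong_open[OF \<Omega> IH] Cons.prems q by simp
    also have "\<dots> = ps (pdiff bs \<gamma>) (t,s) $ i"
      using has_real_derivative_vec_nth[OF C_inf_on_has_vector_derivative_s[OF \<gamma>]] Cons.prems q
      by (auto intro: ps_eqI)
    finally show ?thesis using False q by simp
  qed
qed

lemma Cinf_on_vec_nth:
  fixes \<gamma> :: "real \<times> real \<Rightarrow> real^'n"
  assumes \<Omega>: "open \<Omega>" and \<gamma>: "C_inf_on \<Omega> \<gamma>"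
  shows "Cinf_on \<Omega> (\<lambda>p. \<gamma> p $ i)"
proof -
  have eq: "\<And>p. p \<in> \<Omega> \<Longrightarrow> pdiff bs \<gamma> p $ i = pdiff bs (\<lambda>p. \<gamma> p $ i) p" for bs
    using pdiff_vec_nth[OF \<Omega> \<gamma>] by simp
  have "continuous_on \<Omega> (\<lambda>p. pdiff bs \<gamma> p $ i)" for bs
    using \<gamma> by (auto simp: C_inf_on_def intro!: continuous_on_component)
  then have cont: "continuous_on \<Omega> (pdiff bs (\<lambda>p. \<gamma> p $ i))" for bs
    by (rule continuous_on_eq) (use eq in auto)
  have pd_nth: "partially_differentiable_on \<Omega> (\<lambda>p. pdiff bs \<gamma> p $ i)" for bs
    unfolding partially_differentiable_on_def
  proof (intro allI impI conjI)
    fix t s assume ts: "(t,s) \<in> \<Omega>"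
    show "(\<lambda>\<tau>. pdiff bs \<gamma> (\<tau>,s) $ i) differentiable at t"
      using has_real_derivative_vec_nth[OF C_inf_on_has_vector_derivative_t[OF \<gamma> ts]]
      by (auto simp: real_differentiable_def)
    show "(\<lambda>\<sigma>. pdiff bs \<gamma> (t,\<sigma>) $ i) differentiable at s"
      using has_real_derivative_vec_nth[OF C_inf_on_has_vector_derivative_s[OF \<gamma> ts]]
      by (auto simp: real_differentiable_def)
  qed
  have pd: "partially_differentiable_on \<Omega> (pdiff bs (\<lambda>p. \<gamma> p $ i))" for bs
    using partially_differentiable_on_cong[OF \<Omega> eq[of _ bs] pd_nth[of bs]] .
  have "Ck_on k \<Omega> (pdiff bs (\<lambda>p. \<gamma> p $ i))" for k bs
  proof (induction k arbitrary: bs)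
    case 0 then show ?case using cont by simp
  next
    case (Suc k)
    from Suc.IH[of "True # bs"] Suc.IH[of "False # bs"] show ?case
      using cont pd by (intro Ck_on_SucI) auto
  qed
  from this[of _ "[]"] show ?thesis by (simp add: Cinf_on_def)
qed

section \<open>Plane geometry of vectors orthogonal to a unit vector\<close>

definition cross2 :: "real^2 \<Rightarrow> real^2 \<Rightarrow> real" where
  "cross2 u v = u $ 1 * v $ 2 - u $ 2 * v $ 1"

lemma cross2_zero [simp]: "cross2 0 v = 0" "cross2 v 0 = 0"
  by (simp_all add: cross2_def)

lemma inner_vec2: "inner (v :: real^2) w = v $ 1 * w $ 1 + v $ 2 * w $ 2"
  by (simp add: inner_vec_def sum_2)

lemma norm_vec2_power2: "(norm (v :: real^2))\<^sup>2 = (v $ 1)\<^sup>2 + (v $ 2)\<^sup>2"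
  unfolding power2_norm_eq_inner inner_vec2 by (simp add: power2_eq_square)

text \<open>Vectors orthogonal to a unit vector \<open>e\<close> are multiples of \<open>e\<close> rotated by a right angle,
  with coefficient \<open>cross2 a e\<close>.\<close>

lemma inner_eq_cross2_mult_cross2:
  fixes e a b :: "real^2"
  assumes e: "norm e = 1" and a: "inner e a = 0" and b: "inner e b = 0"
  shows "inner a b = cross2 a e * cross2 b e"
proof -
  have "inner a b - cross2 a e * cross2 b e = inner a b * (1 - (norm e)\<^sup>2) + inner e a * inner e b"
    unfolding norm_vec2_power2 by (simp add: inner_vec2 cross2_def power2_eq_square algebra_simps)
  then show ?thesis using e a b by simp
qed

lemma cross2_eq_0_imp_eq_0:
  fixes e a :: "real^2"
  assumes "e \<noteq> 0" "inner e a = 0" "cross2 a e = 0"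
  shows "a = 0"
proof -
  have "a $ 1 * (norm e)\<^sup>2 = e $ 1 * inner e a + e $ 2 * cross2 a e"
    "a $ 2 * (norm e)\<^sup>2 = e $ 2 * inner e a - e $ 1 * cross2 a e"
    unfolding norm_vec2_power2 by (simp_all add: inner_vec2 cross2_def power2_eq_square algebra_simps)
  with assms(2,3) have "a $ 1 * (norm e)\<^sup>2 = 0" "a $ 2 * (norm e)\<^sup>2 = 0" by simp_all
  moreover have "(norm e)\<^sup>2 \<noteq> 0" using assms(1) by simp
  ultimately show ?thesis by (simp add: vec2_eq_iff del: norm_eq_zero)
qed

lemma cross2_divide_cross2:
  fixes e a b :: "real^2"
  assumes e: "norm e = 1" and a: "inner e a = 0" and b: "inner e b = 0" and "cross2 b e \<noteq> 0"
  shows "cross2 a e / cross2 b e = inner a b / (norm b)\<^sup>2"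
proof -
  have "(norm b)\<^sup>2 = cross2 b e * cross2 b e"
    using inner_eq_cross2_mult_cross2[OF e b b] by (simp add: power2_norm_eq_inner)
  then show ?thesis using inner_eq_cross2_mult_cross2[OF e a b] assms(4) by simp
qed

lemma inner_perp_unit_neq_0:
  fixes e a b :: "real^2"
  assumes e: "norm e = 1" and a: "inner e a = 0" "a \<noteq> 0" and b: "inner e b = 0" "b \<noteq> 0"
  shows "inner a b \<noteq> 0"
proof -
  have "e \<noteq> 0" using e by auto
  then have "cross2 a e \<noteq> 0" "cross2 b e \<noteq> 0"
    using cross2_eq_0_imp_eq_0[of e a] cross2_eq_0_imp_eq_0[of e b] a b by blast+
  then show ?thesis using inner_eq_cross2_mult_cross2[OF e a(1) b(1)] by simp
qed

lemma lin_indep2_of_inner: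
  assumes "inner e a = 0" "a \<noteq> 0" "inner e w \<noteq> 0"
  shows "lin_indep2 a w"
  unfolding lin_indep2_def
proof (intro allI impI)
  fix \<alpha> \<beta> assume "\<alpha> *\<^sub>R a + \<beta> *\<^sub>R w = 0"
  then have "inner e (\<alpha> *\<^sub>R a + \<beta> *\<^sub>R w) = 0" by simp
  then have "\<beta> = 0" using assms(1,3) by (simp add: inner_add_right)
  with \<open>\<alpha> *\<^sub>R a + \<beta> *\<^sub>R w = 0\<close> show "\<alpha> = 0 \<and> \<beta> = 0" using assms(2) by simp
qed

section \<open>Conformal parametrizations and their singular set\<close>

text \<open>The two constraints say that \<open>(t,s) \<mapsto> (t, \<gamma>(t,s))\<close> is conformal: the induced metric is
  \<open>|\<gamma>\<^sub>,\<^sub>s|\<^sup>2 (-dt\<^sup>2 + ds\<^sup>2)\<close>, degenerate exactly where \<open>\<gamma>\<^sub>,\<^sub>s = 0\<close>.\<close>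

locale conformal_param =
  fixes \<Omega> :: "(real \<times> real) set" and \<gamma> :: "real \<times> real \<Rightarrow> real^2"
  assumes open_\<Omega>: "open \<Omega>" and smooth: "C_inf_on \<Omega> \<gamma>"
    and orth: "\<And>p. p \<in> \<Omega> \<Longrightarrow> inner (pt \<gamma> p) (ps \<gamma> p) = 0"
    and conf: "\<And>p. p \<in> \<Omega> \<Longrightarrow> (norm (pt \<gamma> p))\<^sup>2 + (norm (ps \<gamma> p))\<^sup>2 = 1"
begin

definition X :: "real \<times> real \<Rightarrow> real" where "X p = \<gamma> p $ 1"
definition Y :: "real \<times> real \<Rightarrow> real" where "Y p = \<gamma> p $ 2"

lemma Cinf_on_X: "Cinf_on \<Omega> X" and Cinf_on_Y: "Cinf_on \<Omega> Y"
  using Cinf_on_vec_nth[OF open_\<Omega> smooth] by (simp_all add: X_def[abs_def] Y_def[abs_def])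

lemma pdiff_X: "q \<in> \<Omega> \<Longrightarrow> pdiff bs X q = pdiff bs \<gamma> q $ 1"
  and pdiff_Y: "q \<in> \<Omega> \<Longrightarrow> pdiff bs Y q = pdiff bs \<gamma> q $ 2"
  using pdiff_vec_nth[OF open_\<Omega> smooth] by (simp_all add: X_def[abs_def] Y_def[abs_def])

lemmas partials_XY =
  pdiff_X[of _ "[True]", simplified] pdiff_Y[of _ "[True]", simplified]
  pdiff_X[of _ "[False]", simplified] pdiff_Y[of _ "[False]", simplified]
  pdiff_X[of _ "[True, True]", simplified] pdiff_Y[of _ "[True, True]", simplified]
  pdiff_X[of _ "[False, True]", simplified] pdiff_Y[of _ "[False, True]", simplified]
  pdiff_X[of _ "[False, False]", simplified] pdiff_Y[of _ "[False, False]", simplified]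
  pdiff_X[of _ "[False, False, True]", simplified] pdiff_Y[of _ "[False, False, True]", simplified]
  pdiff_X[of _ "[False, False, False]", simplified] pdiff_Y[of _ "[False, False, False]", simplified]

lemmas Cinf_on_calculus = Cinf_on_X Cinf_on_Y Cinf_on_pt Cinf_on_ps Cinf_on_const
  Cinf_on_mult[OF open_\<Omega>] Cinf_on_add[OF open_\<Omega>] Cinf_on_diff[OF open_\<Omega>]
  ps_add_Cinf_on[of \<Omega>] ps_mult_Cinf_on[of \<Omega>] ps_diff_Cinf_on[OF open_\<Omega>]
  pt_add_Cinf_on[of \<Omega>] pt_mult_Cinf_on[of \<Omega>] pt_diff_Cinf_on[OF open_\<Omega>]

lemma orth_XY: "p \<in> \<Omega> \<Longrightarrow> pt X p * ps X p + pt Y p * ps Y p = 0"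
  using orth by (simp add: inner_vec2 partials_XY)

lemma ps_orth:
  assumes q: "q \<in> \<Omega>"
  shows "inner (ps (pt \<gamma>) q) (ps \<gamma> q) + inner (pt \<gamma> q) (ps (ps \<gamma>) q) = 0"
proof -
  have "ps (\<lambda>p. pt X p * ps X p + pt Y p * ps Y p) q = 0"
    by (rule ps_eq_0_open[OF open_\<Omega> orth_XY q])
  then show ?thesis using q by (simp add: Cinf_on_calculus inner_vec2 partials_XY)
qed

lemma ps_ps_orth:
  assumes q: "q \<in> \<Omega>"
  shows "inner (ps (ps (pt \<gamma>)) q) (ps \<gamma> q) + 2 * inner (ps (pt \<gamma>) q) (ps (ps \<gamma>) q)
    + inner (pt \<gamma> q) (ps (ps (ps \<gamma>)) q) = 0"
proof -
  define E where "E = (\<lambda>p. ps (pt X) p * ps X p + pt X p * ps (ps X) p + (ps (pt Y) p * ps Y p + pt Y p * ps (ps Y) p))"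
  have "E p = ps (\<lambda>p. pt X p * ps X p + pt Y p * ps Y p) p" if "p \<in> \<Omega>" for p
    using that by (simp add: E_def Cinf_on_calculus)
  then have "E p = 0" if "p \<in> \<Omega>" for p
    using ps_eq_0_open[OF open_\<Omega> orth_XY that] that by simp
  then have "ps E q = 0" by (rule ps_eq_0_open[OF open_\<Omega> _ q])
  then show ?thesis using q by (simp add: E_def Cinf_on_calculus inner_vec2 partials_XY algebra_simps)
qed

lemma ps_conf:
  assumes q: "q \<in> \<Omega>"
  shows "inner (pt \<gamma> q) (ps (pt \<gamma>) q) + inner (ps \<gamma> q) (ps (ps \<gamma>) q) = 0"
proof -
  have "pt X p * pt X p + pt Y p * pt Y p + (ps X p * ps X p + ps Y p * ps Y p) - 1 = 0" if "p \<in> \<Omega>" for p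
    using conf[OF that] unfolding norm_vec2_power2 by (simp add: partials_XY that power2_eq_square)
  then have "ps (\<lambda>p. pt X p * pt X p + pt Y p * pt Y p + (ps X p * ps X p + ps Y p * ps Y p) - 1) q = 0"
    by (rule ps_eq_0_open[OF open_\<Omega> _ q])
  then show ?thesis using q by (simp add: Cinf_on_calculus inner_vec2 partials_XY algebra_simps)
qed

lemma norm_pt_at_singular: "q \<in> \<Omega> \<Longrightarrow> ps \<gamma> q = 0 \<Longrightarrow> norm (pt \<gamma> q) = 1"
  using conf[of q] norm_ge_zero[of "pt \<gamma> q"] by (simp add: power2_eq_1_iff)

text \<open>\<open>h = cross2 \<gamma>\<^sub>,\<^sub>s \<gamma>\<^sub>,\<^sub>t\<close>; where \<open>\<gamma>\<^sub>,\<^sub>t \<noteq> 0\<close> it vanishes exactly where \<open>\<gamma>\<^sub>,\<^sub>s\<close> does,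
  because \<open>\<gamma>\<^sub>,\<^sub>s \<bottom> \<gamma>\<^sub>,\<^sub>t\<close>.\<close>

definition h :: "real \<times> real \<Rightarrow> real" where
  "h p = ps X p * pt Y p - ps Y p * pt X p"

lemma Cinf_on_h: "Cinf_on \<Omega> h"
  unfolding h_def[abs_def] by (simp add: Cinf_on_calculus)

lemma h_eq_cross2: "q \<in> \<Omega> \<Longrightarrow> h q = cross2 (ps \<gamma> q) (pt \<gamma> q)"
  by (simp add: h_def cross2_def partials_XY)

lemma h_eq_0_iff: "q \<in> \<Omega> \<Longrightarrow> pt \<gamma> q \<noteq> 0 \<Longrightarrow> h q = 0 \<longleftrightarrow> ps \<gamma> q = 0"
  using cross2_eq_0_imp_eq_0[of "pt \<gamma> q" "ps \<gamma> q"] orth[of q] by (auto simp: h_eq_cross2 cross2_def)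

lemma pt_h:
  assumes q: "q \<in> \<Omega>"
  shows "pt h q = cross2 (ps (pt \<gamma>) q) (pt \<gamma> q) + cross2 (ps \<gamma> q) (pt (pt \<gamma>) q)"
  using q Cinf_on_mixed_partials_commute[OF open_\<Omega> Cinf_on_X q]
    Cinf_on_mixed_partials_commute[OF open_\<Omega> Cinf_on_Y q]
  by (simp add: h_def[abs_def] Cinf_on_calculus cross2_def partials_XY algebra_simps)

lemma ps_h:
  assumes q: "q \<in> \<Omega>"
  shows "ps h q = cross2 (ps (ps \<gamma>) q) (pt \<gamma> q) + cross2 (ps \<gamma> q) (ps (pt \<gamma>) q)"
  using q by (simp add: h_def[abs_def] Cinf_on_calculus cross2_def partials_XY algebra_simps)

lemma ps_ps_h:
  assumes q: "q \<in> \<Omega>"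
  shows "ps (ps h) q = cross2 (ps (ps (ps \<gamma>)) q) (pt \<gamma> q) + 2 * cross2 (ps (ps \<gamma>) q) (ps (pt \<gamma>) q)
    + cross2 (ps \<gamma> q) (ps (ps (pt \<gamma>)) q)"
proof -
  define E where "E = (\<lambda>p. ps (ps X) p * pt Y p + ps X p * ps (pt Y) p - (ps (ps Y) p * pt X p + ps Y p * ps (pt X) p))"
  have "ps h p = E p" if "p \<in> \<Omega>" for p
    using that by (simp add: h_def[abs_def] E_def Cinf_on_calculus)
  then have "ps (ps h) q = ps E q" using ps_cong_open[OF open_\<Omega>, of "ps h" E] q by (cases q) auto
  then show ?thesis using q by (simp add: E_def Cinf_on_calculus cross2_def partials_XY algebra_simps)
qed

definition slope :: "real \<times> real \<Rightarrow> real" where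
  "slope p = - ps h p / pt h p"

definition regular :: "(real \<times> real) set" where
  "regular = {p \<in> \<Omega>. pt h p \<noteq> 0 \<and> pt \<gamma> p \<noteq> 0}"

lemma regular_subset: "regular \<subseteq> \<Omega>"
  by (auto simp: regular_def)

lemma open_regular: "open regular"
proof -
  have "continuous_on \<Omega> (pt h)" by (rule Cinf_on_imp_continuous_on[OF Cinf_on_pt[OF Cinf_on_h]])
  moreover have "continuous_on \<Omega> (pt \<gamma>)"
    using smooth[unfolded C_inf_on_def, THEN spec[of _ "[True]"]] by simp
  ultimately have "continuous_on \<Omega> (\<lambda>p. (pt h p, pt \<gamma> p))" by (rule continuous_on_Pair)
  then have "open ((\<lambda>p. (pt h p, pt \<gamma> p)) -` ((- {0}) \<times> (- {0})) \<inter> \<Omega>)"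
    using open_\<Omega> open_Times[OF open_Compl[OF closed_singleton] open_Compl[OF closed_singleton]]
    by (auto simp: continuous_on_open_vimage)
  moreover have "(\<lambda>p. (pt h p, pt \<gamma> p)) -` ((- {0}) \<times> (- {0})) \<inter> \<Omega> = regular"
    by (auto simp: regular_def)
  ultimately show ?thesis by simp
qed

lemma Cinf_on_slope: "Cinf_on regular slope"
  unfolding slope_def[abs_def]
  by (intro Cinf_on_divide Cinf_on_uminus open_regular Cinf_on_pt Cinf_on_ps
      Cinf_on_subset[OF Cinf_on_h regular_subset]) (auto simp: regular_def)

lemma singular_point_regular:
  assumes q: "q \<in> \<Omega>" "ps \<gamma> q = 0" and nz: "ps (pt \<gamma>) q \<noteq> 0"
  shows "q \<in> regular"
proof -
  have "pt \<gamma> q \<noteq> 0" using norm_pt_at_singular[OF q] by auto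
  moreover have "inner (pt \<gamma> q) (ps (pt \<gamma>) q) = 0" using ps_conf[OF q(1)] q(2) by simp
  ultimately have "cross2 (ps (pt \<gamma>) q) (pt \<gamma> q) \<noteq> 0"
    using cross2_eq_0_imp_eq_0[of "pt \<gamma> q" "ps (pt \<gamma>) q"] nz by blast
  then show ?thesis using q \<open>pt \<gamma> q \<noteq> 0\<close> by (simp add: regular_def pt_h)
qed

lemma slope_at_singular:
  assumes q: "q \<in> regular" "ps \<gamma> q = 0"
  shows "slope q = - inner (ps (ps \<gamma>) q) (ps (pt \<gamma>) q) / (norm (ps (pt \<gamma>) q))\<^sup>2"
proof -
  have q\<Omega>: "q \<in> \<Omega>" using q regular_subset by auto
  have "cross2 (ps (ps \<gamma>) q) (pt \<gamma> q) / cross2 (ps (pt \<gamma>) q) (pt \<gamma> q)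
      = inner (ps (ps \<gamma>) q) (ps (pt \<gamma>) q) / (norm (ps (pt \<gamma>) q))\<^sup>2"
    using q q\<Omega> ps_orth[OF q\<Omega>] ps_conf[OF q\<Omega>]
    by (intro cross2_divide_cross2 norm_pt_at_singular) (auto simp: regular_def pt_h)
  then show ?thesis using q\<Omega> q(2) by (simp add: slope_def pt_h ps_h)
qed

lemma ps_slope_at_singular:
  assumes q: "q \<in> regular" "ps \<gamma> q = 0" "ps (ps \<gamma>) q = 0"
  shows "slope q = 0"
    and "ps slope q = - inner (ps (ps (ps \<gamma>)) q) (ps (pt \<gamma>) q) / (norm (ps (pt \<gamma>) q))\<^sup>2"
proof -
  have q\<Omega>: "q \<in> \<Omega>" using q regular_subset by auto
  have psh: "ps h q = 0" using q q\<Omega> by (simp add: ps_h cross2_def)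
  then show "slope q = 0" by (simp add: slope_def)
  have pth: "pt h q \<noteq> 0" using q by (simp add: regular_def)
  have Cinf: "Cinf_on regular (ps h)" "Cinf_on regular (pt h)"
    using Cinf_on_subset[OF Cinf_on_h regular_subset] by (auto intro: Cinf_on_ps Cinf_on_pt)
  have pd: "partially_differentiable_on regular (\<lambda>p. - ps h p)"
    "partially_differentiable_on regular (\<lambda>p. inverse (pt h p))"
    using Cinf Cinf_on_uminus[OF open_regular Cinf(1)]
    by (auto simp: regular_def intro: Cinf_on_imp_partially_differentiable_on partially_differentiable_on_inverse)
  have "ps slope q = ps (\<lambda>p. - ps h p * inverse (pt h p)) q"
    by (simp add: slope_def[abs_def] divide_inverse)
  also have "\<dots> = ps (\<lambda>p. - ps h p) q * inverse (pt h q)"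
    using ps_mult[OF pd q(1)] psh by simp
  also have "\<dots> = - ps (ps h) q / pt h q"
    using ps_uminus_Cinf_on[OF Cinf(1) q(1)] by (simp add: divide_inverse)
  also have "\<dots> = - cross2 (ps (ps (ps \<gamma>)) q) (pt \<gamma> q) / cross2 (ps (pt \<gamma>) q) (pt \<gamma> q)"
    using q q\<Omega> by (simp add: ps_ps_h pt_h cross2_def)
  also have "\<dots> = - inner (ps (ps (ps \<gamma>)) q) (ps (pt \<gamma>) q) / (norm (ps (pt \<gamma>) q))\<^sup>2"
    using q q\<Omega> ps_ps_orth[OF q\<Omega>] ps_conf[OF q\<Omega>] pth cross2_divide_cross2[of "pt \<gamma> q"]
      norm_pt_at_singular[OF q\<Omega> q(2)] by (simp add: pt_h)
  finally show "ps slope q = - inner (ps (ps (ps \<gamma>)) q) (ps (pt \<gamma>) q) / (norm (ps (pt \<gamma>) q))\<^sup>2" .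
qed

lemma has_vector_derivative_pdiff_along_graph:
  assumes W: "open W" "W \<subseteq> \<Omega>" and \<Phi>: "Cinf_on W \<Phi>" and p: "(T s, s) \<in> W"
    and T: "(T has_real_derivative \<Phi> (T s, s)) (at s)"
  shows "((\<lambda>s. pdiff bs \<gamma> (T s, s)) has_vector_derivative
    \<Phi> (T s, s) *\<^sub>R pt (pdiff bs \<gamma>) (T s, s) + ps (pdiff bs \<gamma>) (T s, s)) (at s)"
proof -
  define V where "V = \<Phi> (T s, s) *\<^sub>R pt (pdiff bs \<gamma>) (T s, s) + ps (pdiff bs \<gamma>) (T s, s)"
  note \<gamma>' = C_inf_on_pdiff[OF smooth, of bs]
  have p\<Omega>: "(T s, s) \<in> \<Omega>" using p W(2) by blast
  have "((\<lambda>s. pdiff bs \<gamma> (T s, s) $ i) has_real_derivative V $ i) (at s)" for i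
    using has_real_derivative_along_graph[OF W(1) Cinf_on_subset[OF Cinf_on_vec_nth[OF open_\<Omega> \<gamma>', of i] W(2)] p T]
      pdiff_vec_nth[OF open_\<Omega> \<gamma>' p\<Omega>, of "[True]" i] pdiff_vec_nth[OF open_\<Omega> \<gamma>' p\<Omega>, of "[False]" i]
    by (simp add: V_def algebra_simps)
  from has_vector_derivative_vec2[OF this this] show ?thesis
    by (simp only: V_def[symmetric] vec2_expand[symmetric])
qed

definition singular_curve :: "real set \<Rightarrow> (real \<Rightarrow> real) \<Rightarrow> bool" where
  "singular_curve I T \<longleftrightarrow> open I \<and> (\<forall>s\<in>I. (T s, s) \<in> regular \<and> h (T s, s) = 0 \<and>
     (T has_real_derivative slope (T s, s)) (at s))"

lemma singular_curve_subset: "singular_curve I T \<Longrightarrow> open J \<Longrightarrow> J \<subseteq> I \<Longrightarrow> singular_curve J T"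
  by (auto simp: singular_curve_def)

context
  fixes I T assumes curve: "singular_curve I T"
begin

lemma open_curve_domain: "open I"
  using curve by (simp add: singular_curve_def)

lemma curve_regular: "s \<in> I \<Longrightarrow> (T s, s) \<in> regular"
  and curve_deriv: "s \<in> I \<Longrightarrow> (T has_real_derivative slope (T s, s)) (at s)"
  using curve by (auto simp: singular_curve_def)

lemma curve_\<Omega>: "s \<in> I \<Longrightarrow> (T s, s) \<in> \<Omega>"
  using curve_regular regular_subset by blast

lemma ps_\<gamma>_on_curve: "s \<in> I \<Longrightarrow> ps \<gamma> (T s, s) = 0"
  using curve h_eq_0_iff[OF curve_\<Omega>] by (auto simp: singular_curve_def regular_def)

lemma vd_curve_time:
  "s \<in> I \<Longrightarrow> vd T s = - inner (ps (ps \<gamma>) (T s, s)) (ps (pt \<gamma>) (T s, s)) / (norm (ps (pt \<gamma>) (T s, s)))\<^sup>2"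
  using vd_real_eqI[OF curve_deriv] slope_at_singular[OF curve_regular ps_\<gamma>_on_curve] by simp

lemma smooth1_on_along_curve: "Cinf_on regular g \<Longrightarrow> smooth1_on I (\<lambda>s. g (T s, s))"
  using smooth1_on_along_graph[OF open_regular Cinf_on_slope open_curve_domain] curve_regular curve_deriv
  by blast

lemma has_vector_derivative_pdiff_along_curve:
  "s \<in> I \<Longrightarrow> ((\<lambda>s. pdiff bs \<gamma> (T s, s)) has_vector_derivative
     slope (T s, s) *\<^sub>R pt (pdiff bs \<gamma>) (T s, s) + ps (pdiff bs \<gamma>) (T s, s)) (at s)"
  by (rule has_vector_derivative_pdiff_along_graph[OF open_regular regular_subset Cinf_on_slope
        curve_regular curve_deriv])

lemma smooth1_on_pdiff_along_curve: "smooth1_on I (\<lambda>s. pdiff bs \<gamma> (T s, s))"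
proof -
  have "smooth1_on I (\<lambda>s. pdiff bs \<gamma> (T s, s) $ i)" for i
    by (rule smooth1_on_along_curve[OF Cinf_on_subset[OF
          Cinf_on_vec_nth[OF open_\<Omega> C_inf_on_pdiff[OF smooth]] regular_subset]])
  from this[of 1] this[of 2] show ?thesis by (rule smooth1_on_vec2[OF open_curve_domain])
qed

lemma smooth1_on_curve_time: "smooth1_on I T"
  using smooth1_on_along_curve[OF Cinf_on_subset[OF Cinf_on_fst subset_UNIV]] by simp

lemma smooth1_on_curve: "smooth1_on I (\<lambda>s. (T s, \<gamma> (T s, s)))"
  using smooth1_on_Pair[OF open_curve_domain smooth1_on_curve_time smooth1_on_pdiff_along_curve[of "[]"]] by simp

lemma vd_curve:
  "s \<in> I \<Longrightarrow> vd (\<lambda>s. (T s, \<gamma> (T s, s))) s = (slope (T s, s), slope (T s, s) *\<^sub>R pt \<gamma> (T s, s))"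
  using has_vector_derivative_Pair[OF curve_deriv[unfolded has_real_derivative_iff_has_vector_derivative]
      has_vector_derivative_pdiff_along_curve[of s "[]"]] ps_\<gamma>_on_curve
  by (auto intro: vd_eqI)

lemma curve_null: "s \<in> I \<Longrightarrow> mink (vd (\<lambda>s. (T s, \<gamma> (T s, s))) s) = 0"
  using norm_pt_at_singular[OF curve_\<Omega> ps_\<gamma>_on_curve] by (simp add: vd_curve mink_def power_mult_distrib)

lemma vd_curve_eq_0_iff: "s \<in> I \<Longrightarrow> vd (\<lambda>s. (T s, \<gamma> (T s, s))) s = 0 \<longleftrightarrow> slope (T s, s) = 0"
  by (auto simp: vd_curve zero_prod_def)

lemma slice_cusp_on_curve:
  assumes s: "s \<in> I" and nz: "slope (T s, s) \<noteq> 0"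
  shows "slice_cusp \<gamma> (T s) s"
proof -
  define q where "q = (T s, s)"
  have q: "q \<in> \<Omega>" "q \<in> regular" "ps \<gamma> q = 0"
    using curve_\<Omega> curve_regular ps_\<gamma>_on_curve s by (simp_all add: q_def)
  have e: "norm (pt \<gamma> q) = 1" by (rule norm_pt_at_singular[OF q(1,3)])
  have ts: "cross2 (ps (pt \<gamma>) q) (pt \<gamma> q) \<noteq> 0" using q by (simp add: regular_def pt_h)
  have ss: "cross2 (ps (ps \<gamma>) q) (pt \<gamma> q) \<noteq> 0" using nz q by (simp add: slope_def ps_h q_def)
  have perp: "inner (pt \<gamma> q) (ps (ps \<gamma>) q) = 0" "inner (pt \<gamma> q) (ps (pt \<gamma>) q) = 0"
    using ps_orth[OF q(1)] ps_conf[OF q(1)] q(3) by simp_all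
  text \<open>The twice differentiated orthogonality constraint makes \<open>\<gamma>\<^sub>,\<^sub>s\<^sub>s\<^sub>s\<close> transversal to
    \<open>\<gamma>\<^sub>,\<^sub>t\<close>, while \<open>\<gamma>\<^sub>,\<^sub>s\<^sub>s\<close> is orthogonal to it.\<close>
  have "inner (pt \<gamma> q) (ps (ps (ps \<gamma>)) q) = - 2 * inner (ps (pt \<gamma>) q) (ps (ps \<gamma>) q)"
    using ps_ps_orth[OF q(1)] q(3) by simp
  also have "\<dots> = - 2 * (cross2 (ps (pt \<gamma>) q) (pt \<gamma> q) * cross2 (ps (ps \<gamma>) q) (pt \<gamma> q))"
    using inner_eq_cross2_mult_cross2[OF e perp(2,1)] by simp
  finally have "inner (pt \<gamma> q) (ps (ps (ps \<gamma>)) q) \<noteq> 0" using ts ss by simp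
  moreover have "ps (ps \<gamma>) q \<noteq> 0" using ss by auto
  ultimately show ?thesis
    using lin_indep2_of_inner[OF perp(1)] q(3) by (simp add: slice_cusp_def q_def)
qed

context
  fixes s0 assumes s0: "s0 \<in> I" and ss0: "ps (ps \<gamma>) (T s0, s0) = 0"
begin

lemma slope_at_cusp: "slope (T s0, s0) = 0"
  using ps_slope_at_singular(1)[OF curve_regular[OF s0] ps_\<gamma>_on_curve[OF s0] ss0] .

lemma has_real_derivative_slope_at_cusp:
  "((\<lambda>s. slope (T s, s)) has_real_derivative
     - inner (ps (ps (ps \<gamma>)) (T s0, s0)) (ps (pt \<gamma>) (T s0, s0)) / (norm (ps (pt \<gamma>) (T s0, s0)))\<^sup>2) (at s0)"
  using has_real_derivative_along_graph[OF open_regular Cinf_on_slope curve_regular[OF s0] curve_deriv[OF s0]]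
    ps_slope_at_singular[OF curve_regular[OF s0] ps_\<gamma>_on_curve[OF s0] ss0]
  by simp

lemma cusp_coefficient_neq_0:
  assumes sss0: "ps (ps (ps \<gamma>)) (T s0, s0) \<noteq> 0"
  shows "inner (ps (ps (ps \<gamma>)) (T s0, s0)) (ps (pt \<gamma>) (T s0, s0)) \<noteq> 0"
proof -
  define q where "q = (T s0, s0)"
  have q: "q \<in> \<Omega>" "q \<in> regular" "ps \<gamma> q = 0"
    using curve_\<Omega> curve_regular ps_\<gamma>_on_curve s0 by (simp_all add: q_def)
  have "cross2 (ps (pt \<gamma>) q) (pt \<gamma> q) \<noteq> 0" using q by (simp add: regular_def pt_h)
  then have "ps (pt \<gamma>) q \<noteq> 0" by auto
  then show ?thesis
    using inner_perp_unit_neq_0[OF norm_pt_at_singular[OF q(1,3)]] ps_ps_orth[OF q(1)] ps_conf[OF q(1)]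
      q(3) ss0 sss0 by (simp add: q_def)
qed

lemma curve_cusp_at_cusp:
  assumes sss0: "ps (ps (ps \<gamma>)) (T s0, s0) \<noteq> 0"
  shows "curve_cusp (\<lambda>s. (T s, \<gamma> (T s, s))) s0"
proof -
  define P where "P s = slope (T s, s)" for s
  define G where "G s = pt \<gamma> (T s, s)" for s
  define L where "L = - inner (ps (ps (ps \<gamma>)) (T s0, s0)) (ps (pt \<gamma>) (T s0, s0)) / (norm (ps (pt \<gamma>) (T s0, s0)))\<^sup>2"
  define b where "b = ps (pt \<gamma>) (T s0, s0)"
  have b: "b \<noteq> 0"
    using cusp_coefficient_neq_0[OF sss0] by (metis inner_zero_right b_def)
  then have L: "L \<noteq> 0" using cusp_coefficient_neq_0[OF sss0] by (simp add: L_def b_def)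
  have P: "smooth1_on I P" unfolding P_def[abs_def] by (rule smooth1_on_along_curve[OF Cinf_on_slope])
  have G: "smooth1_on I G" using smooth1_on_pdiff_along_curve[of "[True]"] by (simp add: G_def[abs_def])
  have dP: "P differentiable at s" "vd P differentiable at s" if "s \<in> I" for s
    using smooth1_on_differentiable[OF P that, of 0] smooth1_on_differentiable[OF P that, of 1] by simp_all
  have dG: "G differentiable at s" "vd G differentiable at s" if "s \<in> I" for s
    using smooth1_on_differentiable[OF G that, of 0] smooth1_on_differentiable[OF G that, of 1] by simp_all
  have vd1: "vd (\<lambda>s. (T s, \<gamma> (T s, s))) s = (P s, P s *\<^sub>R G s)" if "s \<in> I" for s
    using vd_curve[OF that] by (simp add: P_def G_def)
  have vd2: "vd (vd (\<lambda>s. (T s, \<gamma> (T s, s)))) s = (vd P s, vd P s *\<^sub>R G s + P s *\<^sub>R vd G s)" if "s \<in> I" for s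
    using vd_cong_open[OF open_curve_domain that vd1] dP[OF that] dG[OF that]
    by (simp add: vd_Pair vd_scaleR)
  have vd3: "vd (vd (vd (\<lambda>s. (T s, \<gamma> (T s, s))))) s0
      = (vd (vd P) s0, vd (vd P) s0 *\<^sub>R G s0 + vd P s0 *\<^sub>R vd G s0 + (vd P s0 *\<^sub>R vd G s0 + P s0 *\<^sub>R vd (vd G) s0))"
    using vd_cong_open[OF open_curve_domain s0 vd2] dP[OF s0] dG[OF s0]
    by (simp add: vd_Pair vd_scaleR vd_add)
  define Q where "Q = vd (vd P) s0"
  have P0: "P s0 = 0" using slope_at_cusp by (simp add: P_def)
  have P1: "vd P s0 = L" using has_real_derivative_slope_at_cusp by (simp add: vd_real_eqI P_def[abs_def] L_def)
  have G1: "vd G s0 = b"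
    using vd_eqI[OF has_vector_derivative_pdiff_along_curve[OF s0, of "[True]"]] slope_at_cusp
    by (simp add: G_def[abs_def] b_def)
  have c1: "vd (\<lambda>s. (T s, \<gamma> (T s, s))) s0 = 0" using vd1[OF s0] P0 by (simp add: zero_prod_def)
  have c2: "vd (vd (\<lambda>s. (T s, \<gamma> (T s, s)))) s0 = (L, L *\<^sub>R G s0)" using vd2[OF s0] P0 P1 by simp
  have "(2 :: real^2) * b = (2 :: real) *\<^sub>R b" by (simp add: vec_eq_iff)
  then have c3: "vd (vd (vd (\<lambda>s. (T s, \<gamma> (T s, s))))) s0 = (Q, Q *\<^sub>R G s0 + (2 * L) *\<^sub>R b)"
    using vd3 P0 P1 G1 by (simp add: Q_def mult.commute)
  show ?thesis
    unfolding curve_cusp_def lin_indep2_def c1 c2 c3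
  proof (intro conjI allI impI refl)
    fix \<alpha> \<beta> assume "\<alpha> *\<^sub>R (L, L *\<^sub>R G s0) + \<beta> *\<^sub>R (Q, Q *\<^sub>R G s0 + (2 * L) *\<^sub>R b) = 0"
    then have f: "\<alpha> * L + \<beta> * Q = 0"
      and g: "\<alpha> *\<^sub>R L *\<^sub>R G s0 + \<beta> *\<^sub>R (Q *\<^sub>R G s0 + (2 * L) *\<^sub>R b) = 0"
      by (simp_all add: zero_prod_def)
    have "\<alpha> * L = - (\<beta> * Q)" using f by linarith
    with g have "(\<beta> * (2 * L)) *\<^sub>R b = 0" by (simp add: scaleR_add_right)
    then have "\<beta> = 0" using L b by simp
    then show "\<alpha> = 0" "\<beta> = 0" using f L by simp_all
  qed
qed

lemma cusp_neighbourhood: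
  assumes sss0: "ps (ps (ps \<gamma>)) (T s0, s0) \<noteq> 0"
  obtains d where "d > 0" "\<And>s. \<bar>s - s0\<bar> < d \<Longrightarrow> s \<in> I"
    "\<And>s. s \<noteq> s0 \<Longrightarrow> \<bar>s - s0\<bar> < d \<Longrightarrow>
       slope (T s, s) \<noteq> 0 \<and> inner (ps (ps (ps \<gamma>)) (T s0, s0)) (ps (pt \<gamma>) (T s0, s0)) * (T s - T s0) < 0"
proof -
  define L where "L = - inner (ps (ps (ps \<gamma>)) (T s0, s0)) (ps (pt \<gamma>) (T s0, s0)) / (norm (ps (pt \<gamma>) (T s0, s0)))\<^sup>2"
  have "ps (pt \<gamma>) (T s0, s0) \<noteq> 0" using cusp_coefficient_neq_0[OF sss0] by (metis inner_zero_right)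
  then have "(norm (ps (pt \<gamma>) (T s0, s0)))\<^sup>2 > 0" by simp
  then have sign: "L * x > 0 \<longleftrightarrow> inner (ps (ps (ps \<gamma>)) (T s0, s0)) (ps (pt \<gamma>) (T s0, s0)) * x < 0" for x
    by (simp add: L_def zero_less_mult_iff mult_less_0_iff divide_less_0_iff zero_less_divide_iff)
  have "L \<noteq> 0" using cusp_coefficient_neq_0[OF sss0] \<open>_ > 0\<close> by (simp add: L_def)
  from strict_extremum_at_simple_critical_point[OF open_curve_domain s0 curve_deriv slope_at_cusp
      has_real_derivative_slope_at_cusp[folded L_def] this]
  obtain d where "d > 0" "\<And>s. \<bar>s - s0\<bar> < d \<Longrightarrow> s \<in> I"
    "\<And>s. s \<noteq> s0 \<Longrightarrow> \<bar>s - s0\<bar> < d \<Longrightarrow> slope (T s, s) \<noteq> 0 \<and> L * (T s - T s0) > 0"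
    by blast
  then show thesis using that sign by blast
qed

end

end

lemma singular_curve_through:
  assumes p0: "(t0,s0) \<in> \<Omega>" "ps \<gamma> (t0,s0) = 0" and nz: "ps (pt \<gamma>) (t0,s0) \<noteq> 0"
  obtains \<epsilon> \<delta> T where "\<epsilon> > 0" "\<delta> > 0" "{t0-\<epsilon>..t0+\<epsilon>} \<times> {s0-\<delta><..<s0+\<delta>} \<subseteq> regular" "T s0 = t0"
    "singular_curve {s0-\<delta><..<s0+\<delta>} T" "\<And>s. s \<in> {s0-\<delta><..<s0+\<delta>} \<Longrightarrow> \<bar>T s - t0\<bar> < \<epsilon>"
    "\<And>t s. \<bar>t - t0\<bar> \<le> \<epsilon> \<Longrightarrow> s \<in> {s0-\<delta><..<s0+\<delta>} \<Longrightarrow> ps \<gamma> (t,s) = 0 \<longleftrightarrow> t = T s"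
proof -
  have q0: "(t0,s0) \<in> regular" by (rule singular_point_regular[OF p0 nz])
  have "Ck_on 1 regular h" using Cinf_on_subset[OF Cinf_on_h regular_subset] by (simp add: Cinf_on_def)
  moreover have "h (t0,s0) = 0" using p0 by (simp add: h_eq_cross2)
  moreover have "pt h (t0,s0) \<noteq> 0" using q0 by (simp add: regular_def)
  ultimately obtain \<epsilon> \<delta> T where *: "\<epsilon> > 0" "\<delta> > 0"
    "{t0-\<epsilon>..t0+\<epsilon>} \<times> {s0-\<delta><..<s0+\<delta>} \<subseteq> regular" "T s0 = t0"
    "\<And>s. s \<in> {s0-\<delta><..<s0+\<delta>} \<Longrightarrow> \<bar>T s - t0\<bar> < \<epsilon> \<and> h (T s, s) = 0 \<and> pt h (T s, s) \<noteq> 0 \<and>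
        (T has_real_derivative - ps h (T s, s) / pt h (T s, s)) (at s)"
    "\<And>t s. \<bar>t - t0\<bar> \<le> \<epsilon> \<Longrightarrow> s \<in> {s0-\<delta><..<s0+\<delta>} \<Longrightarrow> h (t,s) = 0 \<longleftrightarrow> t = T s"
    using implicit_function[OF open_regular _ q0] by blast
  have box: "(t,s) \<in> regular" if "\<bar>t - t0\<bar> \<le> \<epsilon>" "s \<in> {s0-\<delta><..<s0+\<delta>}" for t s
    using *(3) that by (auto simp: abs_le_iff)
  show thesis
  proof (rule that[of \<epsilon> \<delta> T, OF *(1-4)])
    have "(T s, s) \<in> regular" if "s \<in> {s0-\<delta><..<s0+\<delta>}" for s
      using box[OF _ that] *(5)[OF that] by simp
    then show "singular_curve {s0-\<delta><..<s0+\<delta>} T"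
      using *(5) by (simp add: singular_curve_def slope_def)
    show "\<bar>T s - t0\<bar> < \<epsilon>" if "s \<in> {s0-\<delta><..<s0+\<delta>}" for s using *(5)[OF that] by simp
    show "ps \<gamma> (t,s) = 0 \<longleftrightarrow> t = T s" if "\<bar>t - t0\<bar> \<le> \<epsilon>" "s \<in> {s0-\<delta><..<s0+\<delta>}" for t s
      using *(6)[OF that] h_eq_0_iff box[OF that] regular_subset by (auto simp: regular_def)
  qed
qed

lemma singular_curve_near_point:
  assumes p0: "(t0,s0) \<in> \<Omega>" "ps \<gamma> (t0,s0) = 0" and nz: "ps (pt \<gamma>) (t0,s0) \<noteq> 0"
  obtains \<epsilon> \<delta> T where "\<epsilon> > 0" "\<delta> > 0" "{t0-\<epsilon><..<t0+\<epsilon>} \<times> {s0-\<delta><..<s0+\<delta>} \<subseteq> \<Omega>" "T s0 = t0"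
    "singular_curve {s0-\<delta><..<s0+\<delta>} T" "\<And>s. s \<in> {s0-\<delta><..<s0+\<delta>} \<Longrightarrow> \<bar>T s - t0\<bar> < \<epsilon>"
    "\<And>t s. \<bar>t - t0\<bar> < \<epsilon> \<Longrightarrow> s \<in> {s0-\<delta><..<s0+\<delta>} \<Longrightarrow> ps \<gamma> (t,s) = 0 \<longleftrightarrow> t = T s"
    "\<And>s. ps (ps \<gamma>) (t0,s0) = 0 \<Longrightarrow> ps (ps (ps \<gamma>)) (t0,s0) \<noteq> 0 \<Longrightarrow> s \<in> {s0-\<delta><..<s0+\<delta>} \<Longrightarrow>
       s \<noteq> s0 \<Longrightarrow> slope (T s, s) \<noteq> 0 \<and> inner (ps (ps (ps \<gamma>)) (t0,s0)) (ps (pt \<gamma>) (t0,s0)) * (T s - t0) < 0"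
proof -
  obtain \<epsilon> \<delta> T where \<epsilon>: "\<epsilon> > 0" and \<delta>: "\<delta> > 0"
    and box: "{t0-\<epsilon>..t0+\<epsilon>} \<times> {s0-\<delta><..<s0+\<delta>} \<subseteq> regular" and T0: "T s0 = t0"
    and curve: "singular_curve {s0-\<delta><..<s0+\<delta>} T"
    and near: "\<And>s. s \<in> {s0-\<delta><..<s0+\<delta>} \<Longrightarrow> \<bar>T s - t0\<bar> < \<epsilon>"
    and zero: "\<And>t s. \<bar>t - t0\<bar> \<le> \<epsilon> \<Longrightarrow> s \<in> {s0-\<delta><..<s0+\<delta>} \<Longrightarrow> ps \<gamma> (t,s) = 0 \<longleftrightarrow> t = T s"
    using singular_curve_through[OF p0 nz] by blast
  define cusp where "cusp \<longleftrightarrow> ps (ps \<gamma>) (t0, s0) = 0 \<and> ps (ps (ps \<gamma>)) (t0, s0) \<noteq> 0"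
  define k where "k = inner (ps (ps (ps \<gamma>)) (t0, s0)) (ps (pt \<gamma>) (t0, s0))"
  have s0: "s0 \<in> {s0-\<delta><..<s0+\<delta>}" using \<delta> by simp
  text \<open>In the cusp case, shrink the interval to where \<open>T\<close> has a strict extremum at \<open>s\<^sub>0\<close>.\<close>
  obtain \<delta>' where \<delta>': "0 < \<delta>'" "\<delta>' \<le> \<delta>"
    and nbhd: "\<And>s. cusp \<Longrightarrow> s \<in> {s0-\<delta>'<..<s0+\<delta>'} \<Longrightarrow> s \<noteq> s0 \<Longrightarrow>
                 slope (T s, s) \<noteq> 0 \<and> k * (T s - t0) < 0"
  proof (cases cusp)
    case True
    then have "ps (ps \<gamma>) (T s0, s0) = 0" "ps (ps (ps \<gamma>)) (T s0, s0) \<noteq> 0" by (simp_all add: cusp_def T0)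
    from cusp_neighbourhood[OF curve s0 this] obtain d where d: "d > 0"
      "\<And>s. \<bar>s - s0\<bar> < d \<Longrightarrow> s \<in> {s0-\<delta><..<s0+\<delta>}"
      "\<And>s. s \<noteq> s0 \<Longrightarrow> \<bar>s - s0\<bar> < d \<Longrightarrow>
         slope (T s, s) \<noteq> 0 \<and> inner (ps (ps (ps \<gamma>)) (T s0, s0)) (ps (pt \<gamma>) (T s0, s0)) * (T s - T s0) < 0"
      by blast
    show thesis
    proof (rule that[of "min \<delta> d"])
      fix s assume s: "s \<in> {s0 - min \<delta> d<..<s0 + min \<delta> d}" "s \<noteq> s0"
      then have "\<bar>s - s0\<bar> < d" by (auto simp: abs_less_iff min_def split: if_splits)
      with s(2) d(3)[of s] show "slope (T s, s) \<noteq> 0 \<and> k * (T s - t0) < 0" by (simp add: k_def T0)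
    qed (use \<delta> d in auto)
  qed (use \<delta> in auto)
  define J where "J = {s0-\<delta>'<..<s0+\<delta>'}"
  have J: "J \<subseteq> {s0-\<delta><..<s0+\<delta>}" using \<delta>' by (auto simp: J_def)
  show thesis
  proof (rule that[of \<epsilon> \<delta>' T, OF \<epsilon> \<delta>'(1), folded J_def])
    show "{t0-\<epsilon><..<t0+\<epsilon>} \<times> J \<subseteq> \<Omega>" using box J regular_subset by fastforce
    show "singular_curve J T" by (rule singular_curve_subset[OF curve _ J]) (simp add: J_def)
    show "\<bar>T s - t0\<bar> < \<epsilon>" if "s \<in> J" for s using near J that by blast
    show "ps \<gamma> (t,s) = 0 \<longleftrightarrow> t = T s" if "\<bar>t - t0\<bar> < \<epsilon>" "s \<in> J" for t s
      using zero[of t s] that J by auto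
    show "slope (T s, s) \<noteq> 0 \<and> inner (ps (ps (ps \<gamma>)) (t0,s0)) (ps (pt \<gamma>) (t0,s0)) * (T s - t0) < 0"
      if "ps (ps \<gamma>) (t0,s0) = 0" "ps (ps (ps \<gamma>)) (t0,s0) \<noteq> 0" "s \<in> J" "s \<noteq> s0" for s
      using nbhd[of s] that by (simp add: cusp_def k_def J_def)
  qed (rule T0)
qed

end

theorem proposition3p2:
  fixes \<Omega> :: "(real \<times> real) set" and \<gamma> :: "real \<times> real \<Rightarrow> real^2" and t0 s0 :: real
  assumes "open \<Omega>" and "C_inf_on \<Omega> \<gamma>"
    and wave: "\<forall>p\<in>\<Omega>. pt (pt \<gamma>) p = ps (ps \<gamma>) p"
    and orth: "\<forall>p\<in>\<Omega>. inner (pt \<gamma> p) (ps \<gamma> p) = 0"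
    and conf: "\<forall>p\<in>\<Omega>. (norm (pt \<gamma> p))\<^sup>2 + (norm (ps \<gamma> p))\<^sup>2 = 1"
    and "(t0, s0) \<in> \<Omega>" and "ps \<gamma> (t0, s0) = 0" and "ps (pt \<gamma>) (t0, s0) \<noteq> 0"
  shows "\<exists>\<epsilon>>0. \<exists>\<delta>>0. \<exists>T :: real \<Rightarrow> real.
     (let I = {s0 - \<delta> <..< s0 + \<delta>}; c = (\<lambda>s. (T s, \<gamma> (T s, s))) in
       {t0 - \<epsilon> <..< t0 + \<epsilon>} \<times> I \<subseteq> \<Omega>
     \<and> smooth1_on I T \<and> T s0 = t0 \<and> (\<forall>s\<in>I. \<bar>T s - t0\<bar> < \<epsilon>)
     \<and> (\<forall>s\<in>I. vd T s = - inner (ps (ps \<gamma>) (T s, s)) (ps (pt \<gamma>) (T s, s))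
                          / (norm (ps (pt \<gamma>) (T s, s)))\<^sup>2)
     \<and> (\<forall>t s. \<bar>t - t0\<bar> < \<epsilon> \<and> s \<in> I \<longrightarrow> (ps \<gamma> (t, s) = 0 \<longleftrightarrow> t = T s))
     \<and> smooth1_on I c \<and> (\<forall>s\<in>I. mink (vd c s) = 0)
     \<and> (ps (ps \<gamma>) (t0, s0) = 0 \<and> ps (ps (ps \<gamma>)) (t0, s0) \<noteq> 0 \<longrightarrow>
          (\<forall>s\<in>I. s \<noteq> s0 \<longrightarrow> slice_cusp \<gamma> (T s) s)
        \<and> (inner (ps (ps (ps \<gamma>)) (t0, s0)) (ps (pt \<gamma>) (t0, s0)) > 0 \<longrightarrow>
             (\<forall>s\<in>I. s \<noteq> s0 \<longrightarrow> T s < t0))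
        \<and> (inner (ps (ps (ps \<gamma>)) (t0, s0)) (ps (pt \<gamma>) (t0, s0)) < 0 \<longrightarrow>
             (\<forall>s\<in>I. s \<noteq> s0 \<longrightarrow> T s > t0))
        \<and> (\<forall>s\<in>I. s \<noteq> s0 \<longrightarrow> vd c s \<noteq> 0)
        \<and> curve_cusp c s0))"
proof -
  interpret conformal_param \<Omega> \<gamma> using assms(1-5) by unfold_locales auto
  obtain \<epsilon> \<delta> T where \<epsilon>: "\<epsilon> > 0" and \<delta>: "\<delta> > 0"
    and box: "{t0-\<epsilon><..<t0+\<epsilon>} \<times> {s0-\<delta><..<s0+\<delta>} \<subseteq> \<Omega>" and T0: "T s0 = t0"
    and curve: "singular_curve {s0-\<delta><..<s0+\<delta>} T"
    and near: "\<And>s. s \<in> {s0-\<delta><..<s0+\<delta>} \<Longrightarrow> \<bar>T s - t0\<bar> < \<epsilon>"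
    and zero: "\<And>t s. \<bar>t - t0\<bar> < \<epsilon> \<Longrightarrow> s \<in> {s0-\<delta><..<s0+\<delta>} \<Longrightarrow> ps \<gamma> (t,s) = 0 \<longleftrightarrow> t = T s"
    and extremum: "\<And>s. ps (ps \<gamma>) (t0,s0) = 0 \<Longrightarrow> ps (ps (ps \<gamma>)) (t0,s0) \<noteq> 0 \<Longrightarrow>
       s \<in> {s0-\<delta><..<s0+\<delta>} \<Longrightarrow> s \<noteq> s0 \<Longrightarrow>
       slope (T s, s) \<noteq> 0 \<and> inner (ps (ps (ps \<gamma>)) (t0,s0)) (ps (pt \<gamma>) (t0,s0)) * (T s - t0) < 0"
    using singular_curve_near_point[OF assms(6-8)] by blast
  have "s0 \<in> {s0-\<delta><..<s0+\<delta>}" using \<delta> by simp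
  note cusp_at_s0 = curve_cusp_at_cusp[OF curve this, unfolded T0]
  note cusps_near_s0 = extremum slice_cusp_on_curve[OF curve] vd_curve_eq_0_iff[OF curve]
  show ?thesis
    unfolding Let_def
    by (rule exI[of _ \<epsilon>], rule conjI[OF \<epsilon>], rule exI[of _ \<delta>], rule conjI[OF \<delta>], rule exI[of _ T])
       (use box T0 near zero cusp_at_s0 cusps_near_s0 smooth1_on_curve_time[OF curve] smooth1_on_curve[OF curve]
         vd_curve_time[OF curve] curve_null[OF curve] in \<open>auto simp: mult_less_0_iff\<close>)
qed

end
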